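(* Let $(\Gamma,\mathfrak o,\mathfrak m)$ be a Brauer graph with $\mathfrak m\equiv1$ and with no loops or multiple edges, and let $A_\Gamma$ be the associated Brauer graph algebra (with $\mathfrak q\equiv1$). If $L$ and $L'$ are nonsimple, nonprojective uniserial $A_\Gamma$-modules with $\mathrm{soc}(L)\cong\mathrm{soc}(L')$ and $\mathrm{top}(L)\cong\mathrm{top}(L')$, then $L\cong L'$.
   Context: Let $K$ be a field. A Brauer graph $(\Gamma,\mathfrak o,\mathfrak m)$ consists of a finite connected graph $\Gamma$ with at least one edge, a multiplicity function $\mathfrak m:\Gamma_0\to\mathbb Z_{>0}$ on the vertex set $\Gamma_0$, and, for each vertex $\alpha$, a cyclic ordering $\mathfrak o$ of the edges incident with $\alpha$. The valency $\mathrm{val}(\alpha)$ is the number of edges incident with $\alpha$. An edge $t$ is the successor of $s$ at $\alpha$ if $t$ directly follows $s$ in the cyclic ordering at $\alpha$ (if $\mathrm{val}(\alpha)=1$ the unique edge is its own successor). An edge $s$ is truncated at $\alpha$ if $\mathrm{val}(\alpha)=1$, $\mathfrak m(\alpha)=1$ and $s$ is the edge at $\alpha$. The successor sequence of $s$ at $\alpha$ is $s=s_0,s_1,\dots,s_{\mathrm{val}(\alpha)-1}$ with $s_{i+1}$ the successor of $s_i$ at $\alpha$. The Brauer graph algebra $A_\Gamma=KQ_\Gamma/I_\Gamma$ (paths left to right, right modules): if $\Gamma$ is a single edge with both endpoint multiplicities $1$, $A_\Gamma=K[x]/(x^2)$. Otherwise $Q_\Gamma$ has a vertex $v_s$ for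 each edge $s$, and an arrow $v_s\to v_t$ whenever $t$ is the successor of $s$ at a vertex $\alpha$ at which $s$ is not truncated. For $s$ at $\alpha$ not truncated at $\alpha$, with successor sequence $s_0,\dots,s_{v-1}$, $s_v=s_0$, let $C_{s,\alpha}=a_0\cdots a_{v-1}$ with $a_r$ the arrow $v_{s_r}\to v_{s_{r+1}}$ for this succession at $\alpha$. $I_\Gamma$ is generated by: type one, $C_{s,\alpha}^{\mathfrak m(\alpha)}-C_{s,\beta}^{\mathfrak m(\beta)}$ for each edge $s$ with endpoints $\alpha,\beta$ not truncated at either; type two, $C_{s,\beta}^{\mathfrak m(\beta)}b_0$ for each edge $s$ truncated at $\alpha$ with other endpoint $\beta$, where $C_{s,\beta}=b_0b_1\cdots$; type three, each length-two path $ab$ not a subpath of any $C_{t,\gamma}$. *)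

theory Defs
  imports Main
begin

text \<open>Since there are no loops and no
multiple edges, an edge is a two-element set of vertices. The cyclic ordering at a
vertex alpha is given by a successor function sigma alpha on the edges at alpha,
required to be a single cyclic permutation. The multiplicity function is identically 1
and is therefore not carried as a parameter.\<close>

type_synonym 'v arr = "'v set \<times> 'v"
type_synonym 'v qpath = "'v set \<times> ('v set \<times> 'v) list"
type_synonym ('v,'k) kq = "'v qpath \<Rightarrow> 'k"

definition edges_at :: "'v set set \<Rightarrow> 'v \<Rightarrow> 'v set set" where
  "edges_at E \<alpha> = {s\<in>E. \<alpha> \<in> s}"

definition val :: "'v set set \<Rightarrow> 'v \<Rightarrow> nat" where
  "val E \<alpha> = card (edges_at E \<alpha>)"

definition brauer_graph_simple_m1 ::
  "'v set \<Rightarrow> 'v set set \<Rightarrow> ('v \<Rightarrow> 'v set \<Rightarrow> 'v set) \<Rightarrow> bool" where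
  "brauer_graph_simple_m1 V E \<sigma> \<longleftrightarrow>
     finite V \<and> E \<noteq> {} \<and> (\<forall>s\<in>E. s \<subseteq> V \<and> card s = 2)
     \<and> (\<forall>\<alpha>\<in>V. \<forall>\<beta>\<in>V. (\<alpha>, \<beta>) \<in> {(x, y). {x, y} \<in> E}\<^sup>*)
     \<and> (\<forall>\<alpha>\<in>V. bij_betw (\<sigma> \<alpha>) (edges_at E \<alpha>) (edges_at E \<alpha>)
              \<and> (\<forall>s\<in>edges_at E \<alpha>. \<forall>t\<in>edges_at E \<alpha>. \<exists>n. (\<sigma> \<alpha> ^^ n) s = t))"

text \<open>With multiplicity one, s is truncated at alpha iff alpha is an endpoint of s and
val(alpha) = 1. The arrow (s, alpha) goes from v_s to v_(sigma alpha s). In the exceptional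
case of a single edge, Q has one vertex and a single loop.\<close>

definition single_edge :: "'v set set \<Rightarrow> 'v set" where
  "single_edge E = (THE s. s \<in> E)"

definition qarrows :: "'v set set \<Rightarrow> 'v arr set" where
  "qarrows E = (if card E = 1
      then {(single_edge E, SOME \<alpha>. \<alpha> \<in> single_edge E)}
      else {(s, \<alpha>). s \<in> E \<and> \<alpha> \<in> s \<and> val E \<alpha> \<noteq> 1})"

definition asrc :: "'v arr \<Rightarrow> 'v set" where
  "asrc a = fst a"

definition atgt :: "('v \<Rightarrow> 'v set \<Rightarrow> 'v set) \<Rightarrow> 'v arr \<Rightarrow> 'v set" where
  "atgt \<sigma> a = \<sigma> (snd a) (fst a)"

definition valid_path :: "'v set set \<Rightarrow> ('v \<Rightarrow> 'v set \<Rightarrow> 'v set) \<Rightarrow> 'v qpath \<Rightarrow> bool" where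
  "valid_path E \<sigma> p \<longleftrightarrow> fst p \<in> E \<and> set (snd p) \<subseteq> qarrows E
     \<and> (snd p \<noteq> [] \<longrightarrow> asrc (hd (snd p)) = fst p)
     \<and> (\<forall>i. Suc i < length (snd p) \<longrightarrow> atgt \<sigma> (snd p ! i) = asrc (snd p ! Suc i))"

definition path_end :: "('v \<Rightarrow> 'v set \<Rightarrow> 'v set) \<Rightarrow> 'v qpath \<Rightarrow> 'v set" where
  "path_end \<sigma> p = (if snd p = [] then fst p else atgt \<sigma> (last (snd p)))"

section \<open>The path algebra KQ (paths composed left to right)\<close>

definition kq_carrier :: "'v set set \<Rightarrow> ('v \<Rightarrow> 'v set \<Rightarrow> 'v set) \<Rightarrow> ('v,'k::field) kq set" where
  "kq_carrier E \<sigma> = {f. finite {p. f p \<noteq> 0} \<and> (\<forall>p. f p \<noteq> 0 \<longrightarrow> valid_path E \<sigma> p)}"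

definition kq_zero :: "('v,'k::field) kq" where
  "kq_zero = (\<lambda>_. 0)"

definition kq_add :: "('v,'k::field) kq \<Rightarrow> ('v,'k) kq \<Rightarrow> ('v,'k) kq" where
  "kq_add f g = (\<lambda>p. f p + g p)"

definition kq_diff :: "('v,'k::field) kq \<Rightarrow> ('v,'k) kq \<Rightarrow> ('v,'k) kq" where
  "kq_diff f g = (\<lambda>p. f p - g p)"

definition kq_smul :: "'k::field \<Rightarrow> ('v,'k) kq \<Rightarrow> ('v,'k) kq" where
  "kq_smul c f = (\<lambda>p. c * f p)"

definition kq_mult :: "'v set set \<Rightarrow> ('v \<Rightarrow> 'v set \<Rightarrow> 'v set) \<Rightarrow>
    ('v,'k::field) kq \<Rightarrow> ('v,'k) kq \<Rightarrow> ('v,'k) kq" where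
  "kq_mult E \<sigma> f g = (\<lambda>p. if valid_path E \<sigma> p then
      (\<Sum>k\<in>{..length (snd p)}. f (fst p, take k (snd p))
          * g (path_end \<sigma> (fst p, take k (snd p)), drop k (snd p)))
      else 0)"

definition kq_one :: "'v set set \<Rightarrow> ('v,'k::field) kq" where
  "kq_one E = (\<lambda>p. if fst p \<in> E \<and> snd p = [] then 1 else 0)"

definition path_elem :: "'v qpath \<Rightarrow> ('v,'k::field) kq" where
  "path_elem p = (\<lambda>q. if q = p then 1 else 0)"

definition cyc :: "'v set set \<Rightarrow> ('v \<Rightarrow> 'v set \<Rightarrow> 'v set) \<Rightarrow> 'v set \<Rightarrow> 'v \<Rightarrow> 'v arr list" where
  "cyc E \<sigma> s \<alpha> = map (\<lambda>i. ((\<sigma> \<alpha> ^^ i) s, \<alpha>)) [0..<val E \<alpha>]"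

definition bga_rels :: "'v set set \<Rightarrow> ('v \<Rightarrow> 'v set \<Rightarrow> 'v set) \<Rightarrow> ('v,'k::field) kq set" where
  "bga_rels E \<sigma> = (if card E = 1 then
      (let x = (single_edge E, SOME \<alpha>. \<alpha> \<in> single_edge E) in {path_elem (single_edge E, [x, x])})
    else
      {kq_diff (path_elem (s, cyc E \<sigma> s \<alpha>)) (path_elem (s, cyc E \<sigma> s \<beta>)) | s \<alpha> \<beta>.
          s \<in> E \<and> s = {\<alpha>, \<beta>} \<and> \<alpha> \<noteq> \<beta> \<and> val E \<alpha> \<noteq> 1 \<and> val E \<beta> \<noteq> 1}
      \<union> {path_elem (s, cyc E \<sigma> s \<beta> @ [hd (cyc E \<sigma> s \<beta>)]) | s \<alpha> \<beta>.
          s \<in> E \<and> s = {\<alpha>, \<beta>} \<and> \<alpha> \<noteq> \<beta> \<and> val E \<alpha> = 1}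
      \<union> {path_elem (asrc a, [a, b]) | a b.
          a \<in> qarrows E \<and> b \<in> qarrows E \<and> atgt \<sigma> a = asrc b \<and>
          \<not> (\<exists>t \<gamma>. t \<in> E \<and> \<gamma> \<in> t \<and> val E \<gamma> \<noteq> 1 \<and>
                (\<exists>i. Suc i < length (cyc E \<sigma> t \<gamma>) \<and> cyc E \<sigma> t \<gamma> ! i = a
                      \<and> cyc E \<sigma> t \<gamma> ! Suc i = b))})"

inductive_set kq_ideal :: "'v set set \<Rightarrow> ('v \<Rightarrow> 'v set \<Rightarrow> 'v set) \<Rightarrow> ('v,'k::field) kq set \<Rightarrow> ('v,'k) kq set"
  for E \<sigma> R where
  gen: "r \<in> R \<Longrightarrow> r \<in> kq_ideal E \<sigma> R"
| zero: "kq_zero \<in> kq_ideal E \<sigma> R"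
| add: "x \<in> kq_ideal E \<sigma> R \<Longrightarrow> y \<in> kq_ideal E \<sigma> R \<Longrightarrow> kq_add x y \<in> kq_ideal E \<sigma> R"
| mult: "x \<in> kq_ideal E \<sigma> R \<Longrightarrow> f \<in> kq_carrier E \<sigma> \<Longrightarrow> g \<in> kq_carrier E \<sigma> \<Longrightarrow>
          kq_mult E \<sigma> f (kq_mult E \<sigma> x g) \<in> kq_ideal E \<sigma> R"

definition bga_ideal :: "'v set set \<Rightarrow> ('v \<Rightarrow> 'v set \<Rightarrow> 'v set) \<Rightarrow> ('v,'k::field) kq set" where
  "bga_ideal E \<sigma> = kq_ideal E \<sigma> (bga_rels E \<sigma>)"

section \<open>Right modules (carrier based)\<close>

record ('m, 'k, 'a) rmod =
  carr :: "'m set"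
  madd :: "'m \<Rightarrow> 'm \<Rightarrow> 'm"
  mzero :: "'m"
  msmul :: "'k \<Rightarrow> 'm \<Rightarrow> 'm"
  mact :: "'m \<Rightarrow> 'a \<Rightarrow> 'm"

type_synonym ('m,'v,'k) kqmod = "('m, 'k, ('v,'k) kq) rmod"

definition lincomb :: "('m,'v,'k) kqmod \<Rightarrow> 'k list \<Rightarrow> 'm list \<Rightarrow> 'm" where
  "lincomb M cs bs = foldr (\<lambda>cb acc. madd M (msmul M (fst cb) (snd cb)) acc) (zip cs bs) (mzero M)"

definition kq_module :: "'v set set \<Rightarrow> ('v \<Rightarrow> 'v set \<Rightarrow> 'v set) \<Rightarrow> ('m,'v,'k::field) kqmod \<Rightarrow> bool" where
  "kq_module E \<sigma> M \<longleftrightarrow>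
     mzero M \<in> carr M
   \<and> (\<forall>x\<in>carr M. \<forall>y\<in>carr M. madd M x y \<in> carr M)
   \<and> (\<forall>c. \<forall>x\<in>carr M. msmul M c x \<in> carr M)
   \<and> (\<forall>x\<in>carr M. \<forall>f\<in>kq_carrier E \<sigma>. mact M x f \<in> carr M)
   \<and> (\<forall>x\<in>carr M. \<forall>y\<in>carr M. \<forall>z\<in>carr M. madd M (madd M x y) z = madd M x (madd M y z))
   \<and> (\<forall>x\<in>carr M. \<forall>y\<in>carr M. madd M x y = madd M y x)
   \<and> (\<forall>x\<in>carr M. madd M (mzero M) x = x)
   \<and> (\<forall>x\<in>carr M. \<exists>y\<in>carr M. madd M x y = mzero M)
   \<and> (\<forall>c. \<forall>x\<in>carr M. \<forall>y\<in>carr M. msmul M c (madd M x y) = madd M (msmul M c x) (msmul M c y))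
   \<and> (\<forall>c d. \<forall>x\<in>carr M. msmul M (c + d) x = madd M (msmul M c x) (msmul M d x))
   \<and> (\<forall>c d. \<forall>x\<in>carr M. msmul M (c * d) x = msmul M c (msmul M d x))
   \<and> (\<forall>x\<in>carr M. msmul M 1 x = x)
   \<and> (\<forall>x\<in>carr M. \<forall>y\<in>carr M. \<forall>f\<in>kq_carrier E \<sigma>.
        mact M (madd M x y) f = madd M (mact M x f) (mact M y f))
   \<and> (\<forall>x\<in>carr M. \<forall>f\<in>kq_carrier E \<sigma>. \<forall>g\<in>kq_carrier E \<sigma>.
        mact M x (kq_add f g) = madd M (mact M x f) (mact M x g))
   \<and> (\<forall>c. \<forall>x\<in>carr M. \<forall>f\<in>kq_carrier E \<sigma>.
        mact M x (kq_smul c f) = msmul M c (mact M x f)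
      \<and> mact M (msmul M c x) f = msmul M c (mact M x f))
   \<and> (\<forall>x\<in>carr M. \<forall>f\<in>kq_carrier E \<sigma>. \<forall>g\<in>kq_carrier E \<sigma>.
        mact M (mact M x f) g = mact M x (kq_mult E \<sigma> f g))
   \<and> (\<forall>x\<in>carr M. mact M x (kq_one E) = x)
   \<and> (\<exists>bs. set bs \<subseteq> carr M \<and> (\<forall>x\<in>carr M. \<exists>cs. length cs = length bs \<and> x = lincomb M cs bs))"

text \<open>A (finite dimensional) right module over the Brauer graph algebra A = KQ/I:
a right KQ-module annihilated by I.\<close>

definition bga_module :: "'v set set \<Rightarrow> ('v \<Rightarrow> 'v set \<Rightarrow> 'v set) \<Rightarrow> ('m,'v,'k::field) kqmod \<Rightarrow> bool" where
  "bga_module E \<sigma> M \<longleftrightarrow> kq_module E \<sigma> M \<and>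
     (\<forall>x\<in>carr M. \<forall>r\<in>bga_ideal E \<sigma>. mact M x r = mzero M)"

definition submod :: "'v set set \<Rightarrow> ('v \<Rightarrow> 'v set \<Rightarrow> 'v set) \<Rightarrow> ('m,'v,'k::field) kqmod \<Rightarrow> 'm set \<Rightarrow> bool" where
  "submod E \<sigma> M N \<longleftrightarrow> N \<subseteq> carr M \<and> mzero M \<in> N
     \<and> (\<forall>x\<in>N. \<forall>y\<in>N. madd M x y \<in> N)
     \<and> (\<forall>c. \<forall>x\<in>N. msmul M c x \<in> N)
     \<and> (\<forall>x\<in>N. \<forall>f\<in>kq_carrier E \<sigma>. mact M x f \<in> N)"

definition restr :: "('m,'v,'k) kqmod \<Rightarrow> 'm set \<Rightarrow> ('m,'v,'k) kqmod" where
  "restr M N = M\<lparr>carr := N\<rparr>"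

definition simple_mod :: "'v set set \<Rightarrow> ('v \<Rightarrow> 'v set \<Rightarrow> 'v set) \<Rightarrow> ('m,'v,'k::field) kqmod \<Rightarrow> bool" where
  "simple_mod E \<sigma> M \<longleftrightarrow> carr M \<noteq> {mzero M} \<and>
     (\<forall>N. submod E \<sigma> M N \<longrightarrow> N = {mzero M} \<or> N = carr M)"

definition soc :: "'v set set \<Rightarrow> ('v \<Rightarrow> 'v set \<Rightarrow> 'v set) \<Rightarrow> ('m,'v,'k::field) kqmod \<Rightarrow> 'm set" where
  "soc E \<sigma> M = \<Inter>{N. submod E \<sigma> M N \<and>
      (\<forall>S. submod E \<sigma> M S \<and> simple_mod E \<sigma> (restr M S) \<longrightarrow> S \<subseteq> N)}"

definition maximal_submod :: "'v set set \<Rightarrow> ('v \<Rightarrow> 'v set \<Rightarrow> 'v set) \<Rightarrow> ('m,'v,'k::field) kqmod \<Rightarrow> 'm set \<Rightarrow> bool" where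
  "maximal_submod E \<sigma> M N \<longleftrightarrow> submod E \<sigma> M N \<and> N \<noteq> carr M \<and>
     (\<forall>N'. submod E \<sigma> M N' \<and> N \<subseteq> N' \<longrightarrow> N' = N \<or> N' = carr M)"

definition rad :: "'v set set \<Rightarrow> ('v \<Rightarrow> 'v set \<Rightarrow> 'v set) \<Rightarrow> ('m,'v,'k::field) kqmod \<Rightarrow> 'm set" where
  "rad E \<sigma> M = carr M \<inter> \<Inter>{N. maximal_submod E \<sigma> M N}"

definition coset :: "('m,'v,'k) kqmod \<Rightarrow> 'm set \<Rightarrow> 'm \<Rightarrow> 'm set" where
  "coset M N x = {madd M x n | n. n \<in> N}"

definition quot :: "('m,'v,'k) kqmod \<Rightarrow> 'm set \<Rightarrow> ('m set,'v,'k) kqmod" where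
  "quot M N = \<lparr> carr = coset M N ` carr M,
      madd = (\<lambda>C D. {madd M x y | x y. x \<in> C \<and> y \<in> D}),
      mzero = N,
      msmul = (\<lambda>c C. \<Union>x\<in>C. coset M N (msmul M c x)),
      mact = (\<lambda>C f. \<Union>x\<in>C. coset M N (mact M x f)) \<rparr>"

definition top_mod :: "'v set set \<Rightarrow> ('v \<Rightarrow> 'v set \<Rightarrow> 'v set) \<Rightarrow> ('m,'v,'k::field) kqmod \<Rightarrow> ('m set,'v,'k) kqmod" where
  "top_mod E \<sigma> M = quot M (rad E \<sigma> M)"

definition soc_mod :: "'v set set \<Rightarrow> ('v \<Rightarrow> 'v set \<Rightarrow> 'v set) \<Rightarrow> ('m,'v,'k::field) kqmod \<Rightarrow> ('m,'v,'k) kqmod" where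
  "soc_mod E \<sigma> M = restr M (soc E \<sigma> M)"

definition mod_hom :: "'v set set \<Rightarrow> ('v \<Rightarrow> 'v set \<Rightarrow> 'v set) \<Rightarrow> ('m,'v,'k::field) kqmod \<Rightarrow> ('n,'v,'k) kqmod \<Rightarrow> ('m \<Rightarrow> 'n) \<Rightarrow> bool" where
  "mod_hom E \<sigma> M M' h \<longleftrightarrow> h ` carr M \<subseteq> carr M'
     \<and> (\<forall>x\<in>carr M. \<forall>y\<in>carr M. h (madd M x y) = madd M' (h x) (h y))
     \<and> (\<forall>c. \<forall>x\<in>carr M. h (msmul M c x) = msmul M' c (h x))
     \<and> (\<forall>x\<in>carr M. \<forall>f\<in>kq_carrier E \<sigma>. h (mact M x f) = mact M' (h x) f)"

definition mod_iso :: "'v set set \<Rightarrow> ('v \<Rightarrow> 'v set \<Rightarrow> 'v set) \<Rightarrow> ('m,'v,'k::field) kqmod \<Rightarrow> ('n,'v,'k) kqmod \<Rightarrow> bool" where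
  "mod_iso E \<sigma> M M' \<longleftrightarrow> (\<exists>h. mod_hom E \<sigma> M M' h \<and> bij_betw h (carr M) (carr M'))"

definition kq_free_pre :: "'v set set \<Rightarrow> ('v \<Rightarrow> 'v set \<Rightarrow> 'v set) \<Rightarrow> nat \<Rightarrow> (nat \<Rightarrow> ('v,'k::field) kq,'v,'k) kqmod" where
  "kq_free_pre E \<sigma> n = \<lparr> carr = {x. (\<forall>i. x i \<in> kq_carrier E \<sigma>) \<and> (\<forall>i\<ge>n. x i = kq_zero)},
      madd = (\<lambda>x y i. kq_add (x i) (y i)),
      mzero = (\<lambda>i. kq_zero),
      msmul = (\<lambda>c x i. kq_smul c (x i)),
      mact = (\<lambda>x f i. kq_mult E \<sigma> (x i) f) \<rparr>"

text \<open>The free A-module A^n = KQ^n / I^n.\<close>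

definition bga_free :: "'v set set \<Rightarrow> ('v \<Rightarrow> 'v set \<Rightarrow> 'v set) \<Rightarrow> nat \<Rightarrow> ((nat \<Rightarrow> ('v,'k::field) kq) set,'v,'k) kqmod" where
  "bga_free E \<sigma> n = quot (kq_free_pre E \<sigma> n)
      {x \<in> carr (kq_free_pre E \<sigma> n). \<forall>i. x i \<in> bga_ideal E \<sigma>}"

definition projective_mod :: "'v set set \<Rightarrow> ('v \<Rightarrow> 'v set \<Rightarrow> 'v set) \<Rightarrow> ('m,'v,'k::field) kqmod \<Rightarrow> bool" where
  "projective_mod E \<sigma> M \<longleftrightarrow> (\<exists>n X Y.
      submod E \<sigma> (bga_free E \<sigma> n) X \<and> submod E \<sigma> (bga_free E \<sigma> n) Y
    \<and> X \<inter> Y = {mzero (bga_free E \<sigma> n)}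
    \<and> (\<forall>z\<in>carr (bga_free E \<sigma> n). \<exists>x\<in>X. \<exists>y\<in>Y. z = madd (bga_free E \<sigma> n) x y)
    \<and> mod_iso E \<sigma> M (restr (bga_free E \<sigma> n) X))"

definition uniserial :: "'v set set \<Rightarrow> ('v \<Rightarrow> 'v set \<Rightarrow> 'v set) \<Rightarrow> ('m,'v,'k::field) kqmod \<Rightarrow> bool" where
  "uniserial E \<sigma> M \<longleftrightarrow> carr M \<noteq> {mzero M} \<and>
     (\<forall>N N'. submod E \<sigma> M N \<and> submod E \<sigma> M N' \<longrightarrow> N \<subseteq> N' \<or> N' \<subseteq> N)"

end

theory Submission
  imports Defs
begin

text \<open>A uniserial, nonsimple module over the Brauer graph algebra is cyclic, generated by a
vector \<open>u = u e\<^sub>s\<close> for an edge \<open>s\<close>. Exactly one arrow \<open>(s,\<alpha>)\<close> acts nontrivially on \<open>u\<close>: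
two arrows out of \<open>s\<close> at different vertices would generate incomparable submodules. Every
path that is not an initial segment of the cycle \<open>C\<^sub>s\<^sub>,\<^sub>\<alpha>\<close> therefore kills \<open>u\<close>, so the module
is the string module with basis \<open>u C\<^sub>k\<close>, \<open>k < n\<close>, where \<open>C\<^sub>k\<close> is the initial segment of length
\<open>k\<close>; the relations of the algebra force \<open>n \<le> val \<alpha> + 1\<close>. Its top is concentrated at \<open>s\<close> and
its socle at \<open>\<sigma>\<^sub>\<alpha>\<^sup>n\<^sup>-\<^sup>1 s\<close>. Because the graph has no multiple edges, an edge together with the
edge \<open>n - 1\<close> steps further around one of its endpoints determines that endpoint and \<open>n\<close>
(for \<open>n \<ge> 2\<close>); hence top and socle determine the string, and with it the module.\<close>

fun is_walk :: "'v set set \<Rightarrow> ('v \<Rightarrow> 'v set \<Rightarrow> 'v set) \<Rightarrow> 'v set \<Rightarrow> 'v arr list \<Rightarrow> bool" where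
  "is_walk E \<sigma> s [] = (s \<in> E)"
| "is_walk E \<sigma> s (a # w) = (s \<in> E \<and> a \<in> qarrows E \<and> asrc a = s \<and> is_walk E \<sigma> (atgt \<sigma> a) w)"

fun walk_end :: "('v \<Rightarrow> 'v set \<Rightarrow> 'v set) \<Rightarrow> 'v set \<Rightarrow> 'v arr list \<Rightarrow> 'v set" where
  "walk_end \<sigma> s [] = s"
| "walk_end \<sigma> s (a # w) = walk_end \<sigma> (atgt \<sigma> a) w"

lemma path_end_eq_walk_end: "path_end \<sigma> (s, w) = walk_end \<sigma> s w"
proof (induction w arbitrary: s)
  case Nil then show ?case by (simp add: path_end_def)
next
  case (Cons a w) then show ?case by (cases w) (auto simp: path_end_def)
qed

lemma is_walk_start: "is_walk E \<sigma> s w \<Longrightarrow> s \<in> E"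
  by (cases w) auto

lemma is_walk_append:
  "is_walk E \<sigma> s (w1 @ w2) \<longleftrightarrow> is_walk E \<sigma> s w1 \<and> is_walk E \<sigma> (walk_end \<sigma> s w1) w2"
  by (induction w1 arbitrary: s) (auto dest: is_walk_start)

lemma walk_end_append: "walk_end \<sigma> s (w1 @ w2) = walk_end \<sigma> (walk_end \<sigma> s w1) w2"
  by (induction w1 arbitrary: s) auto

text \<open>The initial segment of length \<open>k\<close> of the cycle \<open>C\<^sub>s\<^sub>,\<^sub>\<alpha>\<close>, continued periodically.\<close>

definition cyc_walk :: "('v \<Rightarrow> 'v set \<Rightarrow> 'v set) \<Rightarrow> 'v set \<Rightarrow> 'v \<Rightarrow> nat \<Rightarrow> 'v arr list" where
  "cyc_walk \<sigma> s \<alpha> k = map (\<lambda>i. ((\<sigma> \<alpha> ^^ i) s, \<alpha>)) [0..<k]"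

lemma length_cyc_walk [simp]: "length (cyc_walk \<sigma> s \<alpha> k) = k"
  by (simp add: cyc_walk_def)

lemma cyc_walk_Suc: "cyc_walk \<sigma> s \<alpha> (Suc k) = cyc_walk \<sigma> s \<alpha> k @ [((\<sigma> \<alpha> ^^ k) s, \<alpha>)]"
  by (simp add: cyc_walk_def)

lemma cyc_walk_add:
  "cyc_walk \<sigma> s \<alpha> k @ cyc_walk \<sigma> ((\<sigma> \<alpha> ^^ k) s) \<alpha> m = cyc_walk \<sigma> s \<alpha> (k + m)"
proof (induction m)
  case 0 then show ?case by (simp add: cyc_walk_def)
next
  case (Suc m)
  have "(\<sigma> \<alpha> ^^ m) ((\<sigma> \<alpha> ^^ k) s) = (\<sigma> \<alpha> ^^ (k + m)) s"
    by (metis funpow_add add.commute o_apply)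
  then show ?case using Suc by (simp add: cyc_walk_Suc)
qed

lemma cyc_eq_cyc_walk: "cyc E \<sigma> s \<alpha> = cyc_walk \<sigma> s \<alpha> (val E \<alpha>)"
  by (simp add: cyc_def cyc_walk_def)

section \<open>Transitive permutations of a finite set\<close>

lemma card_le_period:
  assumes "finite X" and trans: "\<forall>x\<in>X. \<forall>y\<in>X. \<exists>n. (f ^^ n) x = y"
    and y: "y \<in> X" and d: "0 < d" "(f ^^ d) y = y"
  shows "card X \<le> d"
proof -
  have "X \<subseteq> (\<lambda>r. (f ^^ r) y) ` {..<d}"
  proof
    fix w assume "w \<in> X"
    then obtain m where "(f ^^ m) y = w" using trans y by blast
    moreover have "(f ^^ (m mod d)) y = (f ^^ m) y" by (rule funpow_mod_eq) (rule d(2))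
    ultimately have "(f ^^ (m mod d)) y = w" by simp
    then show "w \<in> (\<lambda>r. (f ^^ r) y) ` {..<d}" using d by force
  qed
  then have "card X \<le> card ((\<lambda>r. (f ^^ r) y) ` {..<d})" by (simp add: card_mono)
  also have "\<dots> \<le> d" using card_image_le[of "{..<d}"] by simp
  finally show ?thesis .
qed

lemma funpow_inj_below_card:
  assumes bij: "bij_betw f X X" and fin: "finite X" and trans: "\<forall>x\<in>X. \<forall>y\<in>X. \<exists>n. (f ^^ n) x = y"
    and x: "x \<in> X" and ij: "i < j" "j < card X"
  shows "(f ^^ i) x \<noteq> (f ^^ j) x"
proof
  assume eq: "(f ^^ i) x = (f ^^ j) x"
  define y where "y = (f ^^ i) x"
  have y: "y \<in> X" unfolding y_def using bij x bij_betw_funpow bij_betwE by blast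
  have "(f ^^ (j - i)) y = (f ^^ j) x"
    unfolding y_def using ij by (metis funpow_add le_add_diff_inverse2 o_apply less_imp_le_nat)
  then have "(f ^^ (j - i)) y = y" using eq y_def by simp
  then have "card X \<le> j - i" using card_le_period[OF fin trans y] ij by simp
  then show False using ij by simp
qed

lemma funpow_card_fixed:
  assumes bij: "bij_betw f X X" and fin: "finite X" and trans: "\<forall>x\<in>X. \<forall>y\<in>X. \<exists>n. (f ^^ n) x = y"
    and x: "x \<in> X"
  shows "(f ^^ card X) x = x"
proof -
  have orbit: "(f ^^ i) x \<in> X" for i using bij x bij_betw_funpow bij_betwE by blast
  have "\<not> inj_on (\<lambda>i. (f ^^ i) x) {..card X}"
  proof
    assume "inj_on (\<lambda>i. (f ^^ i) x) {..card X}"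
    then have c: "card ((\<lambda>i. (f ^^ i) x) ` {..card X}) = Suc (card X)" by (simp add: card_image)
    have "(\<lambda>i. (f ^^ i) x) ` {..card X} \<subseteq> X" using orbit by blast
    from card_mono[OF fin this] c show False by simp
  qed
  then obtain i0 j0 where ij0: "i0 \<le> card X" "j0 \<le> card X" "i0 \<noteq> j0" "(f ^^ i0) x = (f ^^ j0) x"
    unfolding inj_on_def by auto
  obtain i j where ij: "i < j" "j \<le> card X" "(f ^^ i) x = (f ^^ j) x"
  proof (cases "i0 < j0")
    case True then show ?thesis using that ij0 by blast
  next
    case False then have "j0 < i0" using ij0(3) by simp
    then show ?thesis using that ij0 by metis
  qed
  have j: "j = card X"
  proof (rule ccontr)
    assume "j \<noteq> card X" then have "j < card X" using ij by simp
    then show False using funpow_inj_below_card[OF bij fin trans x ij(1)] ij(3) by blast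
  qed
  have "(f ^^ i) ((f ^^ (card X - i)) x) = (f ^^ (i + (card X - i))) x" by (simp add: funpow_add)
  also have "i + (card X - i) = card X" using ij j by simp
  finally have "(f ^^ i) ((f ^^ (card X - i)) x) = (f ^^ i) x" using ij j by simp
  moreover have "inj_on (f ^^ i) X" using bij bij_betw_funpow bij_betw_def by blast
  ultimately have returns: "(f ^^ (card X - i)) x = x" using orbit x by (meson inj_onD)
  show ?thesis
  proof (cases "i = 0")
    case False
    then have "card X \<le> card X - i" using card_le_period[OF fin trans x _ returns] ij j by simp
    then show ?thesis using False ij j by simp
  qed (use returns in simp)
qed

lemma finite_chain_has_max:
  "finite F \<Longrightarrow> F \<noteq> {} \<Longrightarrow> \<forall>A\<in>F. \<forall>B\<in>F. A \<subseteq> B \<or> B \<subseteq> A \<Longrightarrow> \<exists>X\<in>F. \<forall>A\<in>F. A \<subseteq> X"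
proof (induction F rule: finite_ne_induct)
  case (insert x F)
  then obtain X where X: "X \<in> F" "\<forall>A\<in>F. A \<subseteq> X" by auto
  show ?case
  proof (cases "x \<subseteq> X")
    case False then have "X \<subseteq> x" using insert X by auto
    then show ?thesis using X by auto
  qed (use X in auto)
qed auto

locale brauer_graph =
  fixes V :: "'v set" and E :: "'v set set" and \<sigma> :: "'v \<Rightarrow> 'v set \<Rightarrow> 'v set"
  assumes brauer_graph: "brauer_graph_simple_m1 V E \<sigma>"
begin

lemma edges_nonempty: "E \<noteq> {}"
  using brauer_graph by (simp add: brauer_graph_simple_m1_def)

lemma edge_subset_vertices: "s \<in> E \<Longrightarrow> s \<subseteq> V"
  using brauer_graph by (simp add: brauer_graph_simple_m1_def)

lemma card_edge: "s \<in> E \<Longrightarrow> card s = 2"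
  using brauer_graph by (simp add: brauer_graph_simple_m1_def)

lemma finite_edges: "finite E"
proof -
  have "E \<subseteq> Pow V" using edge_subset_vertices by auto
  then show ?thesis using brauer_graph finite_subset by (auto simp: brauer_graph_simple_m1_def)
qed

lemma finite_edges_at: "finite (edges_at E \<alpha>)"
  using finite_edges by (simp add: edges_at_def)

lemma sigma_bij: "\<alpha> \<in> V \<Longrightarrow> bij_betw (\<sigma> \<alpha>) (edges_at E \<alpha>) (edges_at E \<alpha>)"
  using brauer_graph by (simp add: brauer_graph_simple_m1_def)

lemma sigma_transitive:
  "\<alpha> \<in> V \<Longrightarrow> \<forall>s\<in>edges_at E \<alpha>. \<forall>t\<in>edges_at E \<alpha>. \<exists>n. (\<sigma> \<alpha> ^^ n) s = t"
  using brauer_graph by (simp add: brauer_graph_simple_m1_def)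

lemma sigma_pow_edge: "s \<in> E \<Longrightarrow> \<alpha> \<in> s \<Longrightarrow> (\<sigma> \<alpha> ^^ k) s \<in> E \<and> \<alpha> \<in> (\<sigma> \<alpha> ^^ k) s"
proof -
  assume "s \<in> E" "\<alpha> \<in> s"
  then have "s \<in> edges_at E \<alpha>" "\<alpha> \<in> V" using edge_subset_vertices by (auto simp: edges_at_def)
  then have "(\<sigma> \<alpha> ^^ k) s \<in> edges_at E \<alpha>" using sigma_bij bij_betw_funpow bij_betwE by blast
  then show ?thesis by (simp add: edges_at_def)
qed

lemma sigma_edge: "s \<in> E \<Longrightarrow> \<alpha> \<in> s \<Longrightarrow> \<sigma> \<alpha> s \<in> E \<and> \<alpha> \<in> \<sigma> \<alpha> s"
  using sigma_pow_edge[of s \<alpha> 1] by simp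

lemma sigma_pow_inj:
  "s \<in> E \<Longrightarrow> \<alpha> \<in> s \<Longrightarrow> i < j \<Longrightarrow> j < val E \<alpha> \<Longrightarrow> (\<sigma> \<alpha> ^^ i) s \<noteq> (\<sigma> \<alpha> ^^ j) s"
  using funpow_inj_below_card[OF sigma_bij finite_edges_at sigma_transitive] edge_subset_vertices
  by (fastforce simp: edges_at_def val_def)

lemma sigma_pow_val: "s \<in> E \<Longrightarrow> \<alpha> \<in> s \<Longrightarrow> (\<sigma> \<alpha> ^^ val E \<alpha>) s = s"
  unfolding val_def
  using funpow_card_fixed[OF sigma_bij finite_edges_at sigma_transitive] edge_subset_vertices
  by (fastforce simp: edges_at_def)

lemma sigma_pow_eq_imp_eq:
  "s \<in> E \<Longrightarrow> \<alpha> \<in> s \<Longrightarrow> i < val E \<alpha> \<Longrightarrow> j < val E \<alpha> \<Longrightarrow> (\<sigma> \<alpha> ^^ i) s = (\<sigma> \<alpha> ^^ j) s \<Longrightarrow> i = j"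
  using sigma_pow_inj[of s \<alpha> i j] sigma_pow_inj[of s \<alpha> j i] by (metis linorder_neqE_nat)

lemma val_pos: "s \<in> E \<Longrightarrow> \<alpha> \<in> s \<Longrightarrow> 1 \<le> val E \<alpha>"
proof -
  assume "s \<in> E" "\<alpha> \<in> s"
  then have "edges_at E \<alpha> \<noteq> {}" by (auto simp: edges_at_def)
  then show ?thesis using finite_edges_at by (simp add: val_def Suc_le_eq card_gt_0_iff)
qed

lemma edge_eq_pair: "s \<in> E \<Longrightarrow> \<alpha> \<in> s \<Longrightarrow> \<beta> \<in> s \<Longrightarrow> \<alpha> \<noteq> \<beta> \<Longrightarrow> s = {\<alpha>, \<beta>}"
  using card_edge by (metis card_2_iff doubleton_eq_iff insertE singletonD)

lemma other_endpoint: "s \<in> E \<Longrightarrow> \<alpha> \<in> s \<Longrightarrow> \<exists>\<beta>\<in>s. \<beta> \<noteq> \<alpha>"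
  using card_edge by (metis card_2_iff insertE insertI1 insertI2)

lemma single_edge_eq: "card E = 1 \<Longrightarrow> E = {single_edge E}"
  by (metis card_1_singletonE single_edge_def singletonI the_equality singletonD)

lemma single_edge_vertex: "card E = 1 \<Longrightarrow> (SOME \<alpha>. \<alpha> \<in> single_edge E) \<in> single_edge E"
proof -
  assume "card E = 1"
  then have "card (single_edge E) = 2" using single_edge_eq card_edge by blast
  then show ?thesis by (metis card.empty some_in_eq zero_neq_numeral)
qed

lemma sigma_single_edge: "card E = 1 \<Longrightarrow> \<alpha> \<in> single_edge E \<Longrightarrow> \<sigma> \<alpha> (single_edge E) = single_edge E"
  using single_edge_eq sigma_edge by blast

lemma val_single_edge: "card E = 1 \<Longrightarrow> s \<in> E \<Longrightarrow> \<alpha> \<in> s \<Longrightarrow> val E \<alpha> = 1"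
proof -
  assume "card E = 1" "s \<in> E" "\<alpha> \<in> s"
  then have "edges_at E \<alpha> = {s}" using single_edge_eq by (auto simp: edges_at_def)
  then show ?thesis by (simp add: val_def)
qed

lemma qarrow_cases:
  "a \<in> qarrows E \<Longrightarrow> fst a \<in> E \<and> snd a \<in> fst a
     \<and> (card E = 1 \<longrightarrow> a = (single_edge E, SOME \<alpha>. \<alpha> \<in> single_edge E))
     \<and> (card E \<noteq> 1 \<longrightarrow> val E (snd a) \<noteq> 1)"
  using single_edge_eq single_edge_vertex by (cases "card E = 1") (auto simp: qarrows_def)

lemma qarrow_mem: "(s, \<alpha>) \<in> qarrows E \<Longrightarrow> s \<in> E \<and> \<alpha> \<in> s"
  using qarrow_cases by fastforce

lemma atgt_in_edges: "a \<in> qarrows E \<Longrightarrow> atgt \<sigma> a \<in> E"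
  using qarrow_cases sigma_edge by (auto simp: atgt_def)

lemma asrc_in_edges: "a \<in> qarrows E \<Longrightarrow> asrc a \<in> E"
  using qarrow_cases by (auto simp: asrc_def)

lemma qarrow_is_walk: "(s, \<alpha>) \<in> qarrows E \<Longrightarrow> is_walk E \<sigma> s [(s, \<alpha>)]"
  using atgt_in_edges qarrow_mem by (simp add: asrc_def)

lemma qarrow_sigma_pow: "(s, \<alpha>) \<in> qarrows E \<Longrightarrow> ((\<sigma> \<alpha> ^^ i) s, \<alpha>) \<in> qarrows E"
proof (cases "card E = 1")
  case True
  assume q: "(s, \<alpha>) \<in> qarrows E"
  then have "s = single_edge E" "\<alpha> = (SOME \<alpha>. \<alpha> \<in> single_edge E)" using True by (auto simp: qarrows_def)
  then have "\<sigma> \<alpha> s = s" using sigma_single_edge[OF True] single_edge_vertex[OF True] by simp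
  then have "(\<sigma> \<alpha> ^^ i) s = s" by (induction i) auto
  then show ?thesis using q by simp
next
  case False
  assume "(s, \<alpha>) \<in> qarrows E"
  then show ?thesis using sigma_pow_edge False by (auto simp: qarrows_def)
qed

lemma cyc_walk_is_walk:
  "(s, \<alpha>) \<in> qarrows E \<Longrightarrow> is_walk E \<sigma> s (cyc_walk \<sigma> s \<alpha> k) \<and> walk_end \<sigma> s (cyc_walk \<sigma> s \<alpha> k) = (\<sigma> \<alpha> ^^ k) s"
proof (induction k)
  case 0 then show ?case using qarrow_mem by (simp add: cyc_walk_def)
next
  case (Suc k)
  have "is_walk E \<sigma> ((\<sigma> \<alpha> ^^ k) s) [((\<sigma> \<alpha> ^^ k) s, \<alpha>)]"
    using qarrow_is_walk qarrow_sigma_pow Suc by blast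
  then show ?case using Suc by (simp add: cyc_walk_Suc is_walk_append walk_end_append atgt_def)
qed

lemma qarrow_val_ge2: "card E \<noteq> 1 \<Longrightarrow> (s, \<delta>) \<in> qarrows E \<Longrightarrow> 2 \<le> val E \<delta>"
  using val_pos by (fastforce simp: qarrows_def)

lemma sigma_qarrow_moves: "card E \<noteq> 1 \<Longrightarrow> (s, \<delta>) \<in> qarrows E \<Longrightarrow> \<sigma> \<delta> s \<noteq> s"
  using sigma_pow_inj[of s \<delta> 0 1] qarrow_val_ge2 qarrow_mem by fastforce

text \<open>Around the second endpoint \<open>\<gamma>\<close> of \<open>s = {\<gamma>, \<delta>}\<close> one never reaches \<open>\<sigma>\<^sub>\<delta> s\<close>: that edge would
contain both \<open>\<gamma>\<close> and \<open>\<delta>\<close>, so it would be \<open>s\<close> again, as there are no multiple edges.\<close>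

lemma sigma_pow_ne_sigma_other:
  assumes "card E \<noteq> 1" "(s, \<gamma>) \<in> qarrows E" "(s, \<delta>) \<in> qarrows E" "\<gamma> \<noteq> \<delta>"
  shows "(\<sigma> \<gamma> ^^ k) s \<noteq> \<sigma> \<delta> s"
proof
  assume eq: "(\<sigma> \<gamma> ^^ k) s = \<sigma> \<delta> s"
  have s: "s \<in> E" "\<gamma> \<in> s" "\<delta> \<in> s" using assms qarrow_mem by auto
  have "(\<sigma> \<gamma> ^^ k) s = {\<gamma>, \<delta>}"
    using edge_eq_pair sigma_pow_edge[OF s(1,2)] sigma_edge[OF s(1,3)] eq assms(4) by metis
  moreover have "s = {\<gamma>, \<delta>}" using edge_eq_pair s assms(4) by blast
  ultimately have "\<sigma> \<delta> s = s" using eq by simp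
  then show False using sigma_qarrow_moves assms(1,3) by blast
qed

lemma valid_path_iff_is_walk: "valid_path E \<sigma> (s, w) \<longleftrightarrow> is_walk E \<sigma> s w"
proof (induction w arbitrary: s)
  case Nil then show ?case by (simp add: valid_path_def)
next
  case (Cons a w)
  have "(\<forall>i. Suc i < length (a # w) \<longrightarrow> atgt \<sigma> ((a # w) ! i) = asrc ((a # w) ! Suc i)) \<longleftrightarrow>
     (w \<noteq> [] \<longrightarrow> atgt \<sigma> a = asrc (hd w)) \<and> (\<forall>i. Suc i < length w \<longrightarrow> atgt \<sigma> (w ! i) = asrc (w ! Suc i))"
    (is "?L \<longleftrightarrow> ?R")
  proof
    assume L: ?L
    show ?R
    proof
      show "w \<noteq> [] \<longrightarrow> atgt \<sigma> a = asrc (hd w)" using L[rule_format, of 0] by (cases w) auto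
      show "\<forall>i. Suc i < length w \<longrightarrow> atgt \<sigma> (w ! i) = asrc (w ! Suc i)"
        using L by (metis Suc_less_eq length_Cons nth_Cons_Suc)
    qed
  next
    assume ?R
    then show ?L by (auto simp: hd_conv_nth nth_Cons split: nat.splits)
  qed
  then show ?case
    unfolding valid_path_def fst_conv snd_conv is_walk.simps Cons[symmetric, unfolded valid_path_def fst_conv snd_conv]
    using atgt_in_edges[of a] asrc_in_edges[of "hd w"] hd_in_set[of w] by auto
qed

end

section \<open>The path algebra\<close>

definition idem :: "'v set \<Rightarrow> ('v,'k::field) kq" where
  "idem t = path_elem (t, [])"

context brauer_graph
begin

lemma kq_mult_path_elem_apply:
  "kq_mult E \<sigma> (path_elem (s, w1) :: ('v,'k::field) kq) (path_elem (t, w2)) (r1, r2) =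
     (if is_walk E \<sigma> r1 r2 \<and> r1 = s \<and> r2 = w1 @ w2 \<and> walk_end \<sigma> s w1 = t then 1 else 0)"
proof -
  let ?P = "r1 = s \<and> r2 = w1 @ w2 \<and> walk_end \<sigma> s w1 = t"
  have "(\<Sum>k\<in>{..length r2}. (path_elem (s, w1) :: ('v,'k) kq) (r1, take k r2)
          * path_elem (t, w2) (path_end \<sigma> (r1, take k r2), drop k r2))
      = (\<Sum>k\<in>{..length r2}. if k = length w1 \<and> ?P then 1 else 0)"
  proof (rule sum.cong[OF refl])
    fix k assume "k \<in> {..length r2}"
    then show "(path_elem (s, w1) :: ('v,'k) kq) (r1, take k r2)
          * path_elem (t, w2) (path_end \<sigma> (r1, take k r2), drop k r2) = (if k = length w1 \<and> ?P then 1 else 0)"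
      by (auto simp: path_elem_def path_end_eq_walk_end)
  qed
  also have "\<dots> = (if ?P then 1 else 0)"
  proof (cases ?P)
    case True then show ?thesis by (simp add: sum.delta)
  next
    case False then show ?thesis by (subst sum.neutral) auto
  qed
  finally show ?thesis by (auto simp: kq_mult_def valid_path_iff_is_walk)
qed

lemma kq_mult_path_elem:
  assumes "is_walk E \<sigma> s w1" and "is_walk E \<sigma> t w2"
  shows "kq_mult E \<sigma> (path_elem (s, w1)) (path_elem (t, w2)) =
     (if walk_end \<sigma> s w1 = t then path_elem (s, w1 @ w2) else (kq_zero :: ('v,'k::field) kq))"
proof
  fix r :: "'v qpath"
  obtain r1 r2 where r: "r = (r1, r2)" by (cases r)
  show "kq_mult E \<sigma> (path_elem (s, w1)) (path_elem (t, w2)) r =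
     (if walk_end \<sigma> s w1 = t then path_elem (s, w1 @ w2) else (kq_zero :: ('v,'k) kq)) r"
    unfolding r kq_mult_path_elem_apply using assms by (auto simp: path_elem_def kq_zero_def is_walk_append)
qed

lemma path_elem_carrier: "is_walk E \<sigma> s w \<Longrightarrow> (path_elem (s, w) :: ('v,'k::field) kq) \<in> kq_carrier E \<sigma>"
proof -
  assume "is_walk E \<sigma> s w"
  moreover have "{p. (path_elem (s, w) :: ('v,'k) kq) p \<noteq> 0} = {(s, w)}" by (auto simp: path_elem_def)
  ultimately show ?thesis using valid_path_iff_is_walk by (auto simp: kq_carrier_def path_elem_def)
qed

lemma idem_carrier: "t \<in> E \<Longrightarrow> (idem t :: ('v,'k::field) kq) \<in> kq_carrier E \<sigma>"
  unfolding idem_def by (rule path_elem_carrier) simp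

lemma kq_zero_carrier: "(kq_zero :: ('v,'k::field) kq) \<in> kq_carrier E \<sigma>"
  by (simp add: kq_carrier_def kq_zero_def)

lemma kq_add_carrier:
  "f \<in> kq_carrier E \<sigma> \<Longrightarrow> g \<in> kq_carrier E \<sigma> \<Longrightarrow> kq_add f (g :: ('v,'k::field) kq) \<in> kq_carrier E \<sigma>"
proof -
  assume f: "f \<in> kq_carrier E \<sigma>" and g: "g \<in> kq_carrier E \<sigma>"
  have "{p. kq_add f g p \<noteq> 0} \<subseteq> {p. f p \<noteq> 0} \<union> {p. g p \<noteq> 0}" by (auto simp: kq_add_def)
  then show ?thesis using f g by (auto simp: kq_carrier_def kq_add_def intro: finite_subset)
qed

lemma kq_smul_carrier: "f \<in> kq_carrier E \<sigma> \<Longrightarrow> kq_smul c (f :: ('v,'k::field) kq) \<in> kq_carrier E \<sigma>"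
proof -
  assume f: "f \<in> kq_carrier E \<sigma>"
  have "{p. kq_smul c f p \<noteq> 0} \<subseteq> {p. f p \<noteq> 0}" by (auto simp: kq_smul_def)
  then show ?thesis using f by (auto simp: kq_carrier_def kq_smul_def intro: finite_subset)
qed

lemma kq_mult_carrier:
  "f \<in> kq_carrier E \<sigma> \<Longrightarrow> g \<in> kq_carrier E \<sigma> \<Longrightarrow> kq_mult E \<sigma> f (g :: ('v,'k::field) kq) \<in> kq_carrier E \<sigma>"
proof -
  assume f: "f \<in> kq_carrier E \<sigma>" and g: "g \<in> kq_carrier E \<sigma>"
  let ?concat = "\<lambda>(p, q). (fst p, snd p @ snd q)"
  have "{p. kq_mult E \<sigma> f g p \<noteq> 0} \<subseteq> ?concat ` ({p. f p \<noteq> 0} \<times> {p. g p \<noteq> 0})"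
  proof
    fix r assume "r \<in> {p. kq_mult E \<sigma> f g p \<noteq> 0}"
    then have "(\<Sum>k\<in>{..length (snd r)}. f (fst r, take k (snd r))
          * g (path_end \<sigma> (fst r, take k (snd r)), drop k (snd r))) \<noteq> 0"
      by (auto simp: kq_mult_def split: if_splits)
    then obtain k where "f (fst r, take k (snd r)) * g (path_end \<sigma> (fst r, take k (snd r)), drop k (snd r)) \<noteq> 0"
      using sum.not_neutral_contains_not_neutral by blast
    then show "r \<in> ?concat ` ({p. f p \<noteq> 0} \<times> {p. g p \<noteq> 0})"
      by (intro image_eqI[where x="((fst r, take k (snd r)), (path_end \<sigma> (fst r, take k (snd r)), drop k (snd r)))"]) auto
  qed
  moreover have "finite (?concat ` ({p. f p \<noteq> 0} \<times> {p. g p \<noteq> 0}))"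
    using f g by (auto simp: kq_carrier_def)
  ultimately have "finite {p. kq_mult E \<sigma> f g p \<noteq> 0}" using finite_subset by blast
  then show ?thesis by (simp add: kq_carrier_def kq_mult_def)
qed

lemma kq_carrier_induct [consumes 1, case_names zero step]:
  assumes f: "f \<in> kq_carrier E \<sigma>"
    and zero: "Q (kq_zero :: ('v,'k::field) kq)"
    and step: "\<And>g t w c. g \<in> kq_carrier E \<sigma> \<Longrightarrow> Q g \<Longrightarrow> is_walk E \<sigma> t w \<Longrightarrow>
                 Q (kq_add g (kq_smul c (path_elem (t, w))))"
  shows "Q f"
proof -
  define S0 where "S0 = {p. f p \<noteq> 0}"
  let ?restr = "\<lambda>S q. if q \<in> S then f q else 0"
  have "Q (?restr S) \<and> ?restr S \<in> kq_carrier E \<sigma>" if "S \<subseteq> S0" for S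
  proof -
    have "finite S" using f that finite_subset by (auto simp: kq_carrier_def S0_def)
    then show ?thesis using that
    proof (induction S rule: finite_induct)
      case empty
      have "?restr {} = kq_zero" by (simp add: kq_zero_def)
      then show ?case using zero kq_zero_carrier by simp
    next
      case (insert p S)
      obtain t w where p: "p = (t, w)" by (cases p)
      have "f p \<noteq> 0" using insert by (auto simp: S0_def)
      then have walk: "is_walk E \<sigma> t w" using f p by (auto simp: kq_carrier_def valid_path_iff_is_walk)
      have eq: "?restr (insert p S) = kq_add (?restr S) (kq_smul (f p) (path_elem (t, w)))"
        using insert(2) p by (auto simp: kq_add_def kq_smul_def path_elem_def)
      have "Q (?restr S)" "?restr S \<in> kq_carrier E \<sigma>" using insert by auto
      then show ?case unfolding eq
        using step[OF _ _ walk] kq_add_carrier kq_smul_carrier path_elem_carrier[OF walk] by blast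
    qed
  qed
  moreover have "?restr S0 = f" by (auto simp: S0_def)
  ultimately show ?thesis by force
qed

lemma kq_one_eq_sum: "kq_one E = (\<lambda>q. \<Sum>t\<in>E. (idem t :: ('v,'k::field) kq) q)"
proof
  fix q :: "'v qpath"
  obtain q1 q2 where q: "q = (q1, q2)" by (cases q)
  show "kq_one E q = (\<Sum>t\<in>E. (idem t :: ('v,'k) kq) q)"
  proof (cases "q1 \<in> E \<and> q2 = []")
    case True
    then show ?thesis using finite_edges by (simp add: kq_one_def idem_def path_elem_def q sum.delta)
  qed (auto simp: kq_one_def idem_def path_elem_def q intro!: sum.neutral)
qed

lemma kq_one_carrier: "(kq_one E :: ('v,'k::field) kq) \<in> kq_carrier E \<sigma>"
proof -
  have "{p. (kq_one E :: ('v,'k) kq) p \<noteq> 0} \<subseteq> (\<lambda>t. (t, [])) ` E" by (auto simp: kq_one_def)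
  then have "finite {p. (kq_one E :: ('v,'k) kq) p \<noteq> 0}" using finite_edges finite_subset by blast
  then show ?thesis by (auto simp: kq_carrier_def kq_one_def valid_path_def)
qed

lemma bga_rels_nontrivial: "card E \<noteq> 1 \<Longrightarrow> bga_rels E \<sigma> =
      {kq_diff (path_elem (s, cyc E \<sigma> s \<alpha>)) (path_elem (s, cyc E \<sigma> s \<beta>)) | s \<alpha> \<beta>.
          s \<in> E \<and> s = {\<alpha>, \<beta>} \<and> \<alpha> \<noteq> \<beta> \<and> val E \<alpha> \<noteq> 1 \<and> val E \<beta> \<noteq> 1}
      \<union> {path_elem (s, cyc E \<sigma> s \<beta> @ [hd (cyc E \<sigma> s \<beta>)]) | s \<alpha> \<beta>.
          s \<in> E \<and> s = {\<alpha>, \<beta>} \<and> \<alpha> \<noteq> \<beta> \<and> val E \<alpha> = 1}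
      \<union> {path_elem (asrc a, [a, b]) | a b.
          a \<in> qarrows E \<and> b \<in> qarrows E \<and> atgt \<sigma> a = asrc b \<and>
          \<not> (\<exists>t \<gamma>. t \<in> E \<and> \<gamma> \<in> t \<and> val E \<gamma> \<noteq> 1 \<and>
                (\<exists>i. Suc i < length (cyc E \<sigma> t \<gamma>) \<and> cyc E \<sigma> t \<gamma> ! i = a
                      \<and> cyc E \<sigma> t \<gamma> ! Suc i = b))}"
  unfolding bga_rels_def by (simp only: if_False)

lemma non_cycle_pair_rel:
  assumes c: "card E \<noteq> 1" and ab: "a \<in> qarrows E" "b \<in> qarrows E" "atgt \<sigma> a = asrc b"
    and not_next: "b \<noteq> (\<sigma> (snd a) (fst a), snd a)"
  shows "path_elem (asrc a, [a, b]) \<in> bga_rels E \<sigma>"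
proof -
  have "\<not> (\<exists>t \<gamma>. t \<in> E \<and> \<gamma> \<in> t \<and> val E \<gamma> \<noteq> 1 \<and>
                (\<exists>i. Suc i < length (cyc E \<sigma> t \<gamma>) \<and> cyc E \<sigma> t \<gamma> ! i = a
                      \<and> cyc E \<sigma> t \<gamma> ! Suc i = b))"
  proof
    assume "\<exists>t \<gamma>. t \<in> E \<and> \<gamma> \<in> t \<and> val E \<gamma> \<noteq> 1 \<and>
                (\<exists>i. Suc i < length (cyc E \<sigma> t \<gamma>) \<and> cyc E \<sigma> t \<gamma> ! i = a
                      \<and> cyc E \<sigma> t \<gamma> ! Suc i = b)"
    then obtain t \<gamma> i where "Suc i < length (cyc E \<sigma> t \<gamma>)" "cyc E \<sigma> t \<gamma> ! i = a" "cyc E \<sigma> t \<gamma> ! Suc i = b"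
      by blast
    then have "a = ((\<sigma> \<gamma> ^^ i) t, \<gamma>)" "b = ((\<sigma> \<gamma> ^^ Suc i) t, \<gamma>)"
      by (auto simp: cyc_def simp del: funpow.simps)
    then show False using not_next by simp
  qed
  then show ?thesis unfolding bga_rels_nontrivial[OF c] by (intro UnI2) (use ab in blast)
qed

lemma single_edge_rel: "card E = 1 \<Longrightarrow> a = (single_edge E, SOME \<alpha>. \<alpha> \<in> single_edge E) \<Longrightarrow>
   path_elem (single_edge E, [a, a]) \<in> bga_rels E \<sigma>"
  by (simp add: bga_rels_def Let_def)

lemma cycle_difference_rel:
  assumes "card E \<noteq> 1" "s \<in> E" "\<alpha> \<in> s" "\<beta> \<in> s" "\<alpha> \<noteq> \<beta>" "val E \<alpha> \<noteq> 1" "val E \<beta> \<noteq> 1"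
  shows "kq_diff (path_elem (s, cyc E \<sigma> s \<alpha>)) (path_elem (s, cyc E \<sigma> s \<beta>)) \<in> bga_rels E \<sigma>"
proof -
  have "s = {\<alpha>, \<beta>}" using edge_eq_pair assms by blast
  then show ?thesis unfolding bga_rels_nontrivial[OF assms(1)] by (intro UnI1) (use assms in blast)
qed

lemma truncated_cycle_rel:
  assumes "card E \<noteq> 1" "s \<in> E" "\<alpha> \<in> s" "\<beta> \<in> s" "\<alpha> \<noteq> \<beta>" "val E \<beta> = 1"
  shows "path_elem (s, cyc E \<sigma> s \<alpha> @ [hd (cyc E \<sigma> s \<alpha>)]) \<in> bga_rels E \<sigma>"
proof -
  have "s = {\<beta>, \<alpha>}" using edge_eq_pair assms by blast
  then have "path_elem (s, cyc E \<sigma> s \<alpha> @ [hd (cyc E \<sigma> s \<alpha>)]) \<in>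
      {path_elem (s, cyc E \<sigma> s \<beta>' @ [hd (cyc E \<sigma> s \<beta>')]) | s \<alpha>' \<beta>'.
          s \<in> E \<and> s = {\<alpha>', \<beta>'} \<and> \<alpha>' \<noteq> \<beta>' \<and> val E \<alpha>' = 1}" using assms by blast
  then show ?thesis unfolding bga_rels_nontrivial[OF assms(1)] by (intro UnI1 UnI2)
qed

end

section \<open>Modules over the path algebra\<close>

locale kq_mod = brauer_graph V E \<sigma> for V :: "'v set" and E and \<sigma> +
  fixes M :: "('m,'v,'k::field) kqmod"
  assumes module: "kq_module E \<sigma> M"
begin

abbreviation "C \<equiv> carr M"
abbreviation "zr \<equiv> mzero M"
abbreviation ad (infixl "\<oplus>" 65) where "x \<oplus> y \<equiv> madd M x y"
abbreviation sm (infixr "\<odot>" 70) where "c \<odot> x \<equiv> msmul M c x"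
abbreviation ac (infixl "\<cdot>" 75) where "x \<cdot> f \<equiv> mact M x f"

lemma mzero_closed: "zr \<in> C"
  using module unfolding kq_module_def by (elim conjE) metis

lemma madd_closed: "x \<in> C \<Longrightarrow> y \<in> C \<Longrightarrow> x \<oplus> y \<in> C"
  using module unfolding kq_module_def by (elim conjE) metis

lemma msmul_closed: "x \<in> C \<Longrightarrow> c \<odot> x \<in> C"
  using module unfolding kq_module_def by (elim conjE) metis

lemma mact_closed: "x \<in> C \<Longrightarrow> f \<in> kq_carrier E \<sigma> \<Longrightarrow> x \<cdot> f \<in> C"
  using module unfolding kq_module_def by (elim conjE) metis

lemma madd_assoc: "x \<in> C \<Longrightarrow> y \<in> C \<Longrightarrow> w \<in> C \<Longrightarrow> (x \<oplus> y) \<oplus> w = x \<oplus> (y \<oplus> w)"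
  using module unfolding kq_module_def by (elim conjE) metis

lemma madd_commute: "x \<in> C \<Longrightarrow> y \<in> C \<Longrightarrow> x \<oplus> y = y \<oplus> x"
  using module unfolding kq_module_def by (elim conjE) metis

lemma mzero_madd: "x \<in> C \<Longrightarrow> zr \<oplus> x = x"
  using module unfolding kq_module_def by (elim conjE) metis

lemma madd_neg_exists: "x \<in> C \<Longrightarrow> \<exists>y\<in>C. x \<oplus> y = zr"
  using module unfolding kq_module_def by (elim conjE) metis

lemma msmul_madd: "x \<in> C \<Longrightarrow> y \<in> C \<Longrightarrow> c \<odot> (x \<oplus> y) = c \<odot> x \<oplus> c \<odot> y"
  using module unfolding kq_module_def by (elim conjE) metis

lemma add_msmul: "x \<in> C \<Longrightarrow> (c + d) \<odot> x = c \<odot> x \<oplus> d \<odot> x"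
  using module unfolding kq_module_def by (elim conjE) metis

lemma mult_msmul: "x \<in> C \<Longrightarrow> (c * d) \<odot> x = c \<odot> (d \<odot> x)"
  using module unfolding kq_module_def by (elim conjE) metis

lemma one_msmul: "x \<in> C \<Longrightarrow> 1 \<odot> x = x"
  using module unfolding kq_module_def by (elim conjE) metis

lemma madd_mact: "x \<in> C \<Longrightarrow> y \<in> C \<Longrightarrow> f \<in> kq_carrier E \<sigma> \<Longrightarrow> (x \<oplus> y) \<cdot> f = x \<cdot> f \<oplus> y \<cdot> f"
  using module unfolding kq_module_def by (elim conjE) metis

lemma mact_kq_add: "x \<in> C \<Longrightarrow> f \<in> kq_carrier E \<sigma> \<Longrightarrow> g \<in> kq_carrier E \<sigma> \<Longrightarrow> x \<cdot> kq_add f g = x \<cdot> f \<oplus> x \<cdot> g"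
  using module unfolding kq_module_def by (elim conjE) metis

lemma mact_kq_smul: "x \<in> C \<Longrightarrow> f \<in> kq_carrier E \<sigma> \<Longrightarrow> x \<cdot> kq_smul c f = c \<odot> (x \<cdot> f)"
  using module unfolding kq_module_def by (elim conjE) metis

lemma msmul_mact: "x \<in> C \<Longrightarrow> f \<in> kq_carrier E \<sigma> \<Longrightarrow> (c \<odot> x) \<cdot> f = c \<odot> (x \<cdot> f)"
  using module unfolding kq_module_def by (elim conjE) metis

lemma mact_mact: "x \<in> C \<Longrightarrow> f \<in> kq_carrier E \<sigma> \<Longrightarrow> g \<in> kq_carrier E \<sigma> \<Longrightarrow> (x \<cdot> f) \<cdot> g = x \<cdot> kq_mult E \<sigma> f g"
  using module unfolding kq_module_def by (elim conjE) metis

lemma mact_kq_one: "x \<in> C \<Longrightarrow> x \<cdot> kq_one E = x"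
  using module unfolding kq_module_def by (elim conjE) metis

lemma finite_spanning_list: "\<exists>bs. set bs \<subseteq> C \<and> (\<forall>x\<in>C. \<exists>cs. length cs = length bs \<and> x = lincomb M cs bs)"
  using module unfolding kq_module_def by (elim conjE) metis

lemma madd_mzero: "x \<in> C \<Longrightarrow> x \<oplus> zr = x"
  using mzero_madd madd_commute mzero_closed by metis

lemma madd_left_cancel: "x \<in> C \<Longrightarrow> y \<in> C \<Longrightarrow> w \<in> C \<Longrightarrow> x \<oplus> y = x \<oplus> w \<Longrightarrow> y = w"
proof -
  assume a: "x \<in> C" "y \<in> C" "w \<in> C" "x \<oplus> y = x \<oplus> w"
  obtain n where n: "n \<in> C" "x \<oplus> n = zr" using madd_neg_exists a by blast
  have "y = (n \<oplus> x) \<oplus> y" using n a mzero_madd madd_commute by metis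
  also have "\<dots> = n \<oplus> (x \<oplus> w)" using a n madd_assoc by metis
  also have "\<dots> = w" using n a mzero_madd madd_commute madd_assoc by metis
  finally show ?thesis .
qed

lemma madd_self_imp_mzero: "x \<in> C \<Longrightarrow> x \<oplus> x = x \<Longrightarrow> x = zr"
  using madd_left_cancel madd_mzero mzero_closed by metis

lemma zero_msmul: "x \<in> C \<Longrightarrow> 0 \<odot> x = zr"
  using madd_self_imp_mzero add_msmul[of x 0 0] msmul_closed by simp

lemma msmul_mzero: "c \<odot> zr = zr"
  using madd_self_imp_mzero msmul_madd[of zr zr c] msmul_closed mzero_closed madd_mzero by metis

lemma mact_kq_zero: "x \<in> C \<Longrightarrow> x \<cdot> kq_zero = zr"
proof -
  assume x: "x \<in> C"
  have "kq_add kq_zero kq_zero = (kq_zero :: ('v,'k) kq)" by (simp add: kq_add_def kq_zero_def)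
  then have "x \<cdot> kq_zero \<oplus> x \<cdot> kq_zero = x \<cdot> kq_zero" using mact_kq_add[OF x kq_zero_carrier kq_zero_carrier] by simp
  then show ?thesis using madd_self_imp_mzero mact_closed x kq_zero_carrier by blast
qed

lemma mzero_mact: "f \<in> kq_carrier E \<sigma> \<Longrightarrow> zr \<cdot> f = zr"
  using madd_self_imp_mzero madd_mact[of zr zr f] mact_closed mzero_closed madd_mzero by metis

lemma madd_minus_one_msmul: "x \<in> C \<Longrightarrow> x \<oplus> (-1) \<odot> x = zr"
proof -
  assume x: "x \<in> C"
  have "x \<oplus> (-1) \<odot> x = 1 \<odot> x \<oplus> (-1) \<odot> x" using one_msmul x by simp
  also have "\<dots> = (1 + -1) \<odot> x" using add_msmul[OF x, of 1 "-1"] by simp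
  also have "\<dots> = 0 \<odot> x" by simp
  finally show ?thesis using zero_msmul x by simp
qed

lemma msmul_eq_mzero_imp: "x \<in> C \<Longrightarrow> c \<noteq> 0 \<Longrightarrow> c \<odot> x = zr \<Longrightarrow> x = zr"
proof -
  assume a: "x \<in> C" "c \<noteq> 0" "c \<odot> x = zr"
  have "x = (inverse c * c) \<odot> x" using a one_msmul by simp
  also have "\<dots> = inverse c \<odot> (c \<odot> x)" using mult_msmul[OF a(1)] by blast
  finally show ?thesis using a msmul_mzero by simp
qed

abbreviation "sub N \<equiv> submod E \<sigma> M N"

definition cyc_submod :: "'m \<Rightarrow> 'm set" where "cyc_submod u = {u \<cdot> f | f. f \<in> kq_carrier E \<sigma>}"

lemma submod_cyc_submod: "u \<in> C \<Longrightarrow> sub (cyc_submod u)"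
proof -
  assume u: "u \<in> C"
  show ?thesis unfolding submod_def cyc_submod_def
  proof (intro conjI ballI allI)
    show "{u \<cdot> f |f. f \<in> kq_carrier E \<sigma>} \<subseteq> C" using u mact_closed by auto
    show "zr \<in> {u \<cdot> f |f. f \<in> kq_carrier E \<sigma>}" using mact_kq_zero[OF u] kq_zero_carrier by (metis (mono_tags, lifting) mem_Collect_eq)
    fix x y assume "x \<in> {u \<cdot> f |f. f \<in> kq_carrier E \<sigma>}" "y \<in> {u \<cdot> f |f. f \<in> kq_carrier E \<sigma>}"
    then obtain f g where "x = u \<cdot> f" "y = u \<cdot> g" "f \<in> kq_carrier E \<sigma>" "g \<in> kq_carrier E \<sigma>" by auto
    then show "x \<oplus> y \<in> {u \<cdot> f |f. f \<in> kq_carrier E \<sigma>}" using mact_kq_add[OF u] kq_add_carrier by (metis (mono_tags, lifting) mem_Collect_eq)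
  next
    fix c x assume "x \<in> {u \<cdot> f |f. f \<in> kq_carrier E \<sigma>}"
    then obtain f where "x = u \<cdot> f" "f \<in> kq_carrier E \<sigma>" by auto
    then show "c \<odot> x \<in> {u \<cdot> f |f. f \<in> kq_carrier E \<sigma>}" using mact_kq_smul[OF u] kq_smul_carrier by (metis (mono_tags, lifting) mem_Collect_eq)
  next
    fix x and g :: "('v,'k) kq" assume "x \<in> {u \<cdot> f |f. f \<in> kq_carrier E \<sigma>}" "g \<in> kq_carrier E \<sigma>"
    then obtain f where "x = u \<cdot> f" "f \<in> kq_carrier E \<sigma>" by auto
    then show "x \<cdot> g \<in> {u \<cdot> f |f. f \<in> kq_carrier E \<sigma>}" using mact_mact[OF u] kq_mult_carrier \<open>g \<in> kq_carrier E \<sigma>\<close> by (metis (mono_tags, lifting) mem_Collect_eq)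
  qed
qed

lemma mem_cyc_submod: "u \<in> C \<Longrightarrow> u \<in> cyc_submod u"
  using mact_kq_one kq_one_carrier by (force simp: cyc_submod_def)

lemma cyc_submod_least: "sub N \<Longrightarrow> u \<in> N \<Longrightarrow> cyc_submod u \<subseteq> N"
  by (auto simp: cyc_submod_def submod_def)

lemma eq_if_madd_minus_one_msmul: "a \<in> C \<Longrightarrow> b \<in> C \<Longrightarrow> a \<oplus> (-1) \<odot> b = zr \<Longrightarrow> a = b"
proof -
  assume a: "a \<in> C" "b \<in> C" "a \<oplus> (-1) \<odot> b = zr"
  have nb: "(-1) \<odot> b \<oplus> b = zr" using madd_minus_one_msmul[OF a(2)] madd_commute msmul_closed a(2) by metis
  have "a = a \<oplus> ((-1) \<odot> b \<oplus> b)" using nb madd_mzero a by simp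
  also have "\<dots> = (a \<oplus> (-1) \<odot> b) \<oplus> b" using madd_assoc a msmul_closed by metis
  also have "\<dots> = b" using a mzero_madd by simp
  finally show ?thesis .
qed

lemma mact_path_path:
  assumes "x \<in> C" "is_walk E \<sigma> s w1" "is_walk E \<sigma> t w2"
  shows "(x \<cdot> path_elem (s, w1)) \<cdot> path_elem (t, w2) =
    (if walk_end \<sigma> s w1 = t then x \<cdot> path_elem (s, w1 @ w2) else zr)"
  using mact_mact[OF assms(1) path_elem_carrier[OF assms(2)] path_elem_carrier[OF assms(3)]]
    kq_mult_path_elem[where 'k='k, OF assms(2,3)] mact_kq_zero[OF assms(1)] by simp

lemma mact_path_append: "x \<in> C \<Longrightarrow> is_walk E \<sigma> s (w1 @ w2) \<Longrightarrow>
   x \<cdot> path_elem (s, w1 @ w2) = (x \<cdot> path_elem (s, w1)) \<cdot> path_elem (walk_end \<sigma> s w1, w2)"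
  by (simp add: mact_path_path is_walk_append)

lemma mact_path_idem: "x \<in> C \<Longrightarrow> is_walk E \<sigma> s w \<Longrightarrow> r \<in> E \<Longrightarrow>
   (x \<cdot> path_elem (s, w)) \<cdot> idem r = (if walk_end \<sigma> s w = r then x \<cdot> path_elem (s, w) else zr)"
  unfolding idem_def by (simp add: mact_path_path)

lemma mzero_mact_path: "is_walk E \<sigma> t w \<Longrightarrow> zr \<cdot> path_elem (t, w) = zr"
  using mzero_mact path_elem_carrier by blast

lemma mact_path_closed: "x \<in> C \<Longrightarrow> is_walk E \<sigma> s w \<Longrightarrow> x \<cdot> path_elem (s, w) \<in> C"
  using mact_closed path_elem_carrier by blast

lemma mact_path_off_idem: "y \<in> C \<Longrightarrow> s \<in> E \<Longrightarrow> y \<cdot> idem s = y \<Longrightarrow> is_walk E \<sigma> t w \<Longrightarrow> t \<noteq> s \<Longrightarrow>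
   y \<cdot> path_elem (t, w) = zr"
  using mact_path_path[of y s "[]" t w] by (simp add: idem_def)

lemma mact_mem_subspace:
  assumes x: "x \<in> C" and f: "f \<in> kq_carrier E \<sigma>"
    and zero: "zr \<in> S" and lin: "\<And>a b c. a \<in> S \<Longrightarrow> b \<in> S \<Longrightarrow> a \<oplus> c \<odot> b \<in> S"
    and paths: "\<And>t w. is_walk E \<sigma> t w \<Longrightarrow> x \<cdot> path_elem (t, w) \<in> S"
  shows "x \<cdot> f \<in> S"
  using f
proof (induction rule: kq_carrier_induct)
  case zero then show ?case using mact_kq_zero[OF x] \<open>zr \<in> S\<close> by simp
next
  case (step g t w c)
  then show ?case
    using mact_kq_add[OF x _ kq_smul_carrier[OF path_elem_carrier]] mact_kq_smul[OF x path_elem_carrier] lin paths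
    by simp
qed

lemma madd_swap_middle: "a \<in> C \<Longrightarrow> b \<in> C \<Longrightarrow> p \<in> C \<Longrightarrow> q \<in> C \<Longrightarrow> (a \<oplus> b) \<oplus> (p \<oplus> q) = (a \<oplus> p) \<oplus> (b \<oplus> q)"
proof -
  assume h: "a \<in> C" "b \<in> C" "p \<in> C" "q \<in> C"
  have "(a \<oplus> b) \<oplus> (p \<oplus> q) = a \<oplus> (b \<oplus> (p \<oplus> q))" using madd_assoc h madd_closed by metis
  also have "b \<oplus> (p \<oplus> q) = p \<oplus> (b \<oplus> q)" using madd_assoc madd_commute h madd_closed by metis
  also have "a \<oplus> (p \<oplus> (b \<oplus> q)) = (a \<oplus> p) \<oplus> (b \<oplus> q)" using madd_assoc h madd_closed by metis
  finally show ?thesis .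
qed

fun lcomb :: "(nat \<Rightarrow> 'm) \<Rightarrow> (nat \<Rightarrow> 'k) \<Rightarrow> nat \<Rightarrow> 'm" where
  "lcomb y c 0 = zr"
| "lcomb y c (Suc n) = lcomb y c n \<oplus> c n \<odot> y n"

lemma lcomb_closed: "\<forall>k. y k \<in> C \<Longrightarrow> lcomb y c n \<in> C"
  by (induction n) (auto simp: mzero_closed madd_closed msmul_closed)

lemma lcomb_add: "\<forall>k. y k \<in> C \<Longrightarrow> lcomb y (\<lambda>k. c k + d k) n = lcomb y c n \<oplus> lcomb y d n"
proof (induction n)
  case 0 then show ?case using mzero_madd mzero_closed by simp
next
  case (Suc n)
  then show ?case using madd_swap_middle[of "lcomb y c n" "lcomb y d n" "c n \<odot> y n" "d n \<odot> y n"] lcomb_closed msmul_closed add_msmul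
    by simp
qed

lemma msmul_lcomb: "\<forall>k. y k \<in> C \<Longrightarrow> e \<odot> lcomb y c n = lcomb y (\<lambda>k. e * c k) n"
proof (induction n)
  case 0 then show ?case using msmul_mzero by simp
next
  case (Suc n)
  then show ?case using msmul_madd lcomb_closed msmul_closed mult_msmul by simp
qed

lemma lcomb_mact: "\<forall>k. y k \<in> C \<Longrightarrow> f \<in> kq_carrier E \<sigma> \<Longrightarrow> (lcomb y c n) \<cdot> f = lcomb (\<lambda>k. y k \<cdot> f) c n"
proof (induction n)
  case 0 then show ?case using mzero_mact by simp
next
  case (Suc n)
  then show ?case using madd_mact lcomb_closed msmul_closed msmul_mact by simp
qed

lemma lcomb_cong: "\<forall>k<n. c k = d k \<Longrightarrow> lcomb y c n = lcomb y d n"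
  by (induction n) auto

lemma lcomb_zero: "\<forall>k. y k \<in> C \<Longrightarrow> \<forall>k<n. c k = 0 \<Longrightarrow> lcomb y c n = zr"
  by (induction n) (auto simp: zero_msmul mzero_madd mzero_closed)

lemma lcomb_delta: "\<forall>k. y k \<in> C \<Longrightarrow> lcomb y (\<lambda>k. if k = j then 1 else 0) n = (if j < n then y j else zr)"
proof (induction n)
  case 0 then show ?case by simp
next
  case (Suc n)
  show ?case
  proof (cases "j < n")
    case True then show ?thesis using Suc zero_msmul madd_mzero by simp
  next
    case False
    then show ?thesis using Suc zero_msmul madd_mzero mzero_madd one_msmul mzero_closed by (cases "j = n") auto
  qed
qed

lemma lcomb_single_survivor: "\<forall>k. y k \<in> C \<Longrightarrow> j < n \<Longrightarrow> \<forall>k<j. c k = 0 \<Longrightarrow> \<forall>k. j < k \<and> k < n \<longrightarrow> y k = zr \<Longrightarrow>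
   lcomb y c n = c j \<odot> y j"
proof (induction n)
  case 0 then show ?case by simp
next
  case (Suc n)
  show ?case
  proof (cases "j = n")
    case True
    then have "lcomb y c n = zr" using lcomb_zero Suc by blast
    then show ?thesis using True mzero_madd msmul_closed Suc by simp
  next
    case False
    then have "lcomb y c n = c j \<odot> y j" using Suc by simp
    moreover have "y n = zr" using Suc False by simp
    ultimately show ?thesis using msmul_mzero madd_mzero msmul_closed Suc by simp
  qed
qed

lemma lcomb_split_first: "\<forall>k. y k \<in> C \<Longrightarrow> 0 < n \<Longrightarrow> lcomb y c n = c 0 \<odot> y 0 \<oplus> lcomb y (c(0:=0)) n"
proof (induction n)
  case 0 then show ?case by simp
next
  case (Suc n)
  show ?case
  proof (cases "n = 0")
    case True then show ?thesis using Suc mzero_madd madd_mzero zero_msmul msmul_closed mzero_closed by simp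
  next
    case False
    then have "lcomb y c (Suc n) = (c 0 \<odot> y 0 \<oplus> lcomb y (c(0:=0)) n) \<oplus> c n \<odot> y n" using Suc by (simp del: fun_upd_apply)
    also have "\<dots> = c 0 \<odot> y 0 \<oplus> (lcomb y (c(0:=0)) n \<oplus> c n \<odot> y n)" using madd_assoc msmul_closed lcomb_closed Suc by metis
    moreover have "(c(0:=0)) n = c n" using False by simp
    ultimately show ?thesis by (simp del: fun_upd_apply)
  qed
qed

lemma simple_mod_line:
  assumes y: "y \<in> C" "y \<noteq> zr" and S: "S = {c \<odot> y | c. True}"
  shows "simple_mod E \<sigma> (restr M S)"
  unfolding simple_mod_def
proof (intro conjI allI impI)
  have "y \<in> S" using S one_msmul y by (metis (mono_tags, lifting) mem_Collect_eq)
  then show "carr (restr M S) \<noteq> {mzero (restr M S)}" using y by (auto simp: restr_def)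
next
  fix N assume N: "submod E \<sigma> (restr M S) N"
  then have NS: "N \<subseteq> S" and z: "zr \<in> N" and smN: "\<forall>c. \<forall>x\<in>N. c \<odot> x \<in> N"
    by (auto simp: submod_def restr_def)
  show "N = {mzero (restr M S)} \<or> N = carr (restr M S)"
  proof (cases "N = {zr}")
    case True then show ?thesis by (simp add: restr_def)
  next
    case False
    then obtain v where v: "v \<in> N" "v \<noteq> zr" using z by blast
    then obtain c where c: "v = c \<odot> y" using NS S by blast
    have "c \<noteq> 0" using c v zero_msmul y by auto
    then have "y = inverse c \<odot> v" using c mult_msmul[OF y(1), of "inverse c" c] one_msmul y by simp
    then have yN: "y \<in> N" using smN v by simp
    have "S \<subseteq> N" using S smN yN by blast
    then show ?thesis using NS by (simp add: restr_def)
  qed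
qed

lemma restr_carrier: "restr M C = M" by (simp add: restr_def)

lemma lincomb_in_submod: "sub N \<Longrightarrow> set bs \<subseteq> N \<Longrightarrow> length cs = length bs \<Longrightarrow> lincomb M cs bs \<in> N"
proof (induction bs arbitrary: cs)
  case Nil then show ?case by (simp add: lincomb_def submod_def)
next
  case (Cons b bs)
  then obtain c cs' where cs: "cs = c # cs'" by (cases cs) auto
  have "lincomb M cs' bs \<in> N" using Cons cs by simp
  moreover have "c \<odot> b \<in> N" using Cons.prems by (simp add: submod_def)
  ultimately show ?case using Cons.prems cs by (simp add: lincomb_def submod_def)
qed

lemma mem_submod_if_idem_components:
  assumes b: "b \<in> C" and N: "sub N" and parts: "\<forall>t\<in>E. b \<cdot> idem t \<in> N"
  shows "b \<in> N"
proof -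
  let ?e = "\<lambda>T q. \<Sum>t\<in>T. (idem t :: ('v,'k) kq) q"
  have "?e T \<in> kq_carrier E \<sigma> \<and> b \<cdot> ?e T \<in> N" if "T \<subseteq> E" for T
  proof -
    have "finite T" using that finite_edges finite_subset by blast
    then show ?thesis using that
    proof (induction T rule: finite_induct)
      case empty
      have "?e {} = kq_zero" by (simp add: kq_zero_def)
      then show ?case using kq_zero_carrier mact_kq_zero[OF b] N by (simp add: submod_def)
    next
      case (insert t T)
      have "?e (insert t T) = kq_add (?e T) (idem t)"
        using insert(1,2) by (simp add: kq_add_def add.commute)
      moreover have IH: "?e T \<in> kq_carrier E \<sigma>" "b \<cdot> ?e T \<in> N" and "t \<in> E" using insert by auto
      moreover have e: "(idem t :: ('v,'k) kq) \<in> kq_carrier E \<sigma>" using idem_carrier \<open>t \<in> E\<close> .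
      ultimately show ?case
        using kq_add_carrier[OF IH(1) e] mact_kq_add[OF b IH(1) e] parts N by (simp add: submod_def)
    qed
  qed
  then have "b \<cdot> kq_one E \<in> N" using kq_one_eq_sum[where 'k='k] by auto
  then show ?thesis using mact_kq_one b by simp
qed

lemma submod_eq_carrier_if_idem_components:
  assumes "sub X" and bs: "set bs \<subseteq> C" "\<forall>x\<in>C. \<exists>cs. length cs = length bs \<and> x = lincomb M cs bs"
    and parts: "\<And>b t. b \<in> set bs \<Longrightarrow> t \<in> E \<Longrightarrow> b \<cdot> idem t \<in> X"
  shows "X = C"
proof
  have "set bs \<subseteq> X" using mem_submod_if_idem_components[OF _ \<open>sub X\<close>] parts bs(1) by blast
  show "C \<subseteq> X"
  proof
    fix x assume "x \<in> C"
    then obtain cs where "length cs = length bs" "x = lincomb M cs bs" using bs(2) by blast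
    then show "x \<in> X" using lincomb_in_submod[OF \<open>sub X\<close> \<open>set bs \<subseteq> X\<close>] by simp
  qed
qed (use \<open>sub X\<close> in \<open>simp add: submod_def\<close>)

lemma cyc_submod_mzero: "cyc_submod zr = {zr}"
proof
  show "cyc_submod zr \<subseteq> {zr}" using mzero_mact unfolding cyc_submod_def by blast
  show "{zr} \<subseteq> cyc_submod zr" using mem_cyc_submod mzero_closed by blast
qed

lemma minus_one_msmul_submod: "sub N \<Longrightarrow> m \<in> N \<Longrightarrow> (-1) \<odot> m \<in> N" by (simp add: submod_def)

lemma coset_madd_submod: "sub N \<Longrightarrow> z \<in> C \<Longrightarrow> m' \<in> N \<Longrightarrow> coset M N (z \<oplus> m') = coset M N z"
proof -
  assume N: "sub N" and z: "z \<in> C" and m': "m' \<in> N"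
  have NC: "N \<subseteq> C" using N by (simp add: submod_def)
  have m'C: "m' \<in> C" using NC m' by blast
  show ?thesis
  proof
    show "coset M N (z \<oplus> m') \<subseteq> coset M N z"
    proof
      fix w assume "w \<in> coset M N (z \<oplus> m')"
      then obtain m where m: "m \<in> N" "w = (z \<oplus> m') \<oplus> m" by (auto simp: coset_def)
      then have "w = z \<oplus> (m' \<oplus> m)" using madd_assoc z m'C NC by blast
      moreover have "m' \<oplus> m \<in> N" using N m' m by (simp add: submod_def)
      ultimately show "w \<in> coset M N z" by (auto simp: coset_def)
    qed
    show "coset M N z \<subseteq> coset M N (z \<oplus> m')"
    proof
      fix w assume "w \<in> coset M N z"
      then obtain m where m: "m \<in> N" "w = z \<oplus> m" by (auto simp: coset_def)
      have mC: "m \<in> C" using m NC by blast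
      have nm: "(-1) \<odot> m' \<in> N" using minus_one_msmul_submod N m' by blast
      have nmC: "(-1) \<odot> m' \<in> C" using nm NC by blast
      have "(z \<oplus> m') \<oplus> ((-1) \<odot> m' \<oplus> m) = z \<oplus> ((m' \<oplus> (-1) \<odot> m') \<oplus> m)"
        using madd_assoc z m'C nmC mC madd_closed by metis
      also have "\<dots> = w" using madd_minus_one_msmul[OF m'C] mzero_madd mC m by simp
      finally have "w = (z \<oplus> m') \<oplus> ((-1) \<odot> m' \<oplus> m)" by simp
      moreover have "(-1) \<odot> m' \<oplus> m \<in> N" using N nm m by (simp add: submod_def)
      ultimately show "w \<in> coset M N (z \<oplus> m')" by (auto simp: coset_def)
    qed
  qed
qed

lemma mem_coset_self: "sub N \<Longrightarrow> y \<in> C \<Longrightarrow> y \<in> coset M N y"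
proof -
  assume N: "sub N" and y: "y \<in> C"
  have "zr \<in> N" using N by (simp add: submod_def)
  moreover have "y = y \<oplus> zr" using madd_mzero[OF y] by simp
  ultimately show ?thesis unfolding coset_def by blast
qed

lemma coset_mzero: "sub N \<Longrightarrow> coset M N zr = N"
proof -
  assume N: "sub N"
  then have NC: "N \<subseteq> C" by (simp add: submod_def)
  show ?thesis
  proof
    show "coset M N zr \<subseteq> N" unfolding coset_def using mzero_madd NC by auto
    show "N \<subseteq> coset M N zr"
    proof
      fix m assume m: "m \<in> N"
      then have "m = zr \<oplus> m" using mzero_madd NC by auto
      then show "m \<in> coset M N zr" unfolding coset_def using m by blast
    qed
  qed
qed

lemma coset_submod_mem: "sub N \<Longrightarrow> m \<in> N \<Longrightarrow> coset M N m = N"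
proof -
  assume N: "sub N" and m: "m \<in> N"
  have "m \<in> C" using N m by (auto simp: submod_def)
  have "coset M N (zr \<oplus> m) = coset M N zr" by (rule coset_madd_submod[OF N mzero_closed m])
  then show ?thesis using mzero_madd \<open>m \<in> C\<close> coset_mzero[OF N] by simp
qed

lemma coset_eq_imp: "sub N \<Longrightarrow> y \<in> C \<Longrightarrow> coset M N y = coset M N z \<Longrightarrow> \<exists>m\<in>N. y = z \<oplus> m"
proof -
  assume N: "sub N" and y: "y \<in> C" and e: "coset M N y = coset M N z"
  have "y \<in> coset M N z" using mem_coset_self[OF N y] e by simp
  then show ?thesis by (auto simp: coset_def)
qed

lemma quot_mact_coset: "sub N \<Longrightarrow> y \<in> C \<Longrightarrow> f \<in> kq_carrier E \<sigma> \<Longrightarrow> mact (quot M N) (coset M N y) f = coset M N (y \<cdot> f)"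
proof -
  assume N: "sub N" and y: "y \<in> C" and f: "f \<in> kq_carrier E \<sigma>"
  have NC: "N \<subseteq> C" using N by (simp add: submod_def)
  have each: "coset M N (w \<cdot> f) = coset M N (y \<cdot> f)" if w: "w \<in> coset M N y" for w
  proof -
    obtain m where m: "m \<in> N" "w = y \<oplus> m" using w by (auto simp: coset_def)
    have "w \<cdot> f = y \<cdot> f \<oplus> m \<cdot> f" using madd_mact y m NC f by blast
    moreover have "m \<cdot> f \<in> N" using N m f by (simp add: submod_def)
    ultimately show ?thesis using coset_madd_submod[OF N mact_closed[OF y f]] by simp
  qed
  have "mact (quot M N) (coset M N y) f = (\<Union>w\<in>coset M N y. coset M N (w \<cdot> f))" by (simp add: quot_def)
  also have "\<dots> = coset M N (y \<cdot> f)" using each mem_coset_self[OF N y] by blast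
  finally show ?thesis .
qed

lemma quot_msmul_coset: "sub N \<Longrightarrow> y \<in> C \<Longrightarrow> msmul (quot M N) c (coset M N y) = coset M N (c \<odot> y)"
proof -
  assume N: "sub N" and y: "y \<in> C"
  have NC: "N \<subseteq> C" using N by (simp add: submod_def)
  have each: "coset M N (c \<odot> w) = coset M N (c \<odot> y)" if w: "w \<in> coset M N y" for w
  proof -
    obtain m where m: "m \<in> N" "w = y \<oplus> m" using w by (auto simp: coset_def)
    have "c \<odot> w = c \<odot> y \<oplus> c \<odot> m" using msmul_madd y m NC by blast
    moreover have "c \<odot> m \<in> N" using N m by (simp add: submod_def)
    ultimately show ?thesis using coset_madd_submod[OF N msmul_closed[OF y]] by simp
  qed
  have "msmul (quot M N) c (coset M N y) = (\<Union>w\<in>coset M N y. coset M N (c \<odot> w))" by (simp add: quot_def)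
  also have "\<dots> = coset M N (c \<odot> y)" using each mem_coset_self[OF N y] by blast
  finally show ?thesis .
qed

lemma quot_zero_facts: "sub N \<Longrightarrow> mzero (quot M N) \<in> carr (quot M N) \<and> (\<forall>Y\<in>carr (quot M N). msmul (quot M N) 0 Y = mzero (quot M N))"
proof -
  assume N: "sub N"
  have "mzero (quot M N) = coset M N zr" using coset_mzero[OF N] by (simp add: quot_def)
  then have "mzero (quot M N) \<in> carr (quot M N)" using mzero_closed by (simp add: quot_def)
  moreover have "\<forall>Y\<in>carr (quot M N). msmul (quot M N) 0 Y = mzero (quot M N)"
  proof
    fix Y assume "Y \<in> carr (quot M N)"
    then obtain y where y: "y \<in> C" "Y = coset M N y" by (auto simp: quot_def)
    then show "msmul (quot M N) 0 Y = mzero (quot M N)"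
      using quot_msmul_coset[OF N y(1)] zero_msmul[OF y(1)] coset_mzero[OF N] by (simp add: quot_def)
  qed
  ultimately show ?thesis by blast
qed

end

text \<open>The first two conjuncts are only there to
make a bijective homomorphism preserve zero, as \<open>T\<close> need not be a module.\<close>

definition concentrated_at :: "'v set set \<Rightarrow> ('m,'v,'k::field) kqmod \<Rightarrow> 'v set \<Rightarrow> bool" where
  "concentrated_at E T s \<longleftrightarrow> mzero T \<in> carr T \<and> (\<forall>Y\<in>carr T. msmul T 0 Y = mzero T)
     \<and> (\<exists>Y\<in>carr T. Y \<noteq> mzero T \<and> mact T Y (idem s) = Y)
     \<and> (\<forall>t\<in>E. t \<noteq> s \<longrightarrow> (\<forall>Y\<in>carr T. mact T Y (idem t) = Y \<longrightarrow> Y = mzero T))"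

lemma mod_hom_mzero:
  assumes "mod_hom E \<sigma> A B h" and "mzero A \<in> carr A" and "msmul A 0 (mzero A) = mzero A"
    and "\<forall>Y\<in>carr B. msmul B 0 Y = mzero B"
  shows "h (mzero A) = mzero B"
proof -
  have "h (mzero A) = h (msmul A 0 (mzero A))" using assms(3) by simp
  also have "\<dots> = msmul B 0 (h (mzero A))" using assms(1,2) by (simp add: mod_hom_def)
  also have "\<dots> = mzero B" using assms(1,2,4) by (auto simp: mod_hom_def)
  finally show ?thesis .
qed

text \<open>A cyclic module \<open>L = u A\<close> is determined by which pairs \<open>f, g\<close> satisfy \<open>u f = u g\<close>; the
isomorphism sends \<open>u f\<close> to \<open>u' f\<close>.\<close>

definition cyclic_transfer ::
  "'v set set \<Rightarrow> ('v \<Rightarrow> 'v set \<Rightarrow> 'v set) \<Rightarrow> ('m,'v,'k::field) kqmod \<Rightarrow> 'm \<Rightarrow> ('n,'v,'k) kqmod \<Rightarrow> 'n \<Rightarrow> 'm \<Rightarrow> 'n"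
  where "cyclic_transfer E \<sigma> L u L' u' y = mact L' u' (SOME f. f \<in> kq_carrier E \<sigma> \<and> y = mact L u f)"

lemma cyclic_transfer_mact:
  assumes same_kernel: "\<forall>f\<in>kq_carrier E \<sigma>. \<forall>g\<in>kq_carrier E \<sigma>. mact L u f = mact L u g \<longleftrightarrow> mact L' u' f = mact L' u' g"
    and f: "f \<in> kq_carrier E \<sigma>"
  shows "cyclic_transfer E \<sigma> L u L' u' (mact L u f) = mact L' u' f"
proof -
  let ?g = "SOME g. g \<in> kq_carrier E \<sigma> \<and> mact L u f = mact L u g"
  have "\<exists>g. g \<in> kq_carrier E \<sigma> \<and> mact L u f = mact L u g" using f by blast
  then have "?g \<in> kq_carrier E \<sigma> \<and> mact L u f = mact L u ?g" by (rule someI_ex)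
  then have "mact L' u' f = mact L' u' ?g" using same_kernel f by blast
  then show ?thesis unfolding cyclic_transfer_def by (rule sym)
qed

context brauer_graph
begin

lemma concentrated_at_iso_unique:
  fixes A :: "('a,'v,'k::field) kqmod" and B :: "('b,'v,'k) kqmod"
  assumes iso: "mod_iso E \<sigma> A B" and A: "concentrated_at E A s" and B: "concentrated_at E B s'"
    and "s \<in> E"
  shows "s = s'"
proof (rule ccontr)
  assume "s \<noteq> s'"
  obtain h where hom: "mod_hom E \<sigma> A B h" and bij: "bij_betw h (carr A) (carr B)"
    using iso by (auto simp: mod_iso_def)
  obtain Y where Y: "Y \<in> carr A" "Y \<noteq> mzero A" "mact A Y (idem s) = Y"
    using A by (auto simp: concentrated_at_def)
  have zero: "mzero A \<in> carr A" "msmul A 0 (mzero A) = mzero A" "\<forall>Y\<in>carr B. msmul B 0 Y = mzero B"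
    using A B by (auto simp: concentrated_at_def)
  have off: "\<forall>Y\<in>carr B. mact B Y (idem s) = Y \<longrightarrow> Y = mzero B"
    using B \<open>s \<in> E\<close> \<open>s \<noteq> s'\<close> by (simp add: concentrated_at_def)
  have "\<forall>x\<in>carr A. \<forall>f\<in>kq_carrier E \<sigma>. h (mact A x f) = mact B (h x) f"
    using hom by (simp add: mod_hom_def)
  then have "h (mact A Y (idem s)) = mact B (h Y) (idem s)"
    using Y(1) idem_carrier[where 'k='k, OF \<open>s \<in> E\<close>] by blast
  then have "mact B (h Y) (idem s) = h Y" using Y(3) by simp
  then have "h Y = mzero B" using off bij_betwE[OF bij] Y(1) by blast
  also have "\<dots> = h (mzero A)" using mod_hom_mzero[OF hom zero] by simp
  finally have "Y = mzero A" using bij Y(1) zero(1) by (meson bij_betw_def inj_onD)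
  then show False using Y(2) by simp
qed

lemma cyclic_transfer_hom:
  fixes L :: "('m,'v,'k::field) kqmod" and L' :: "('n,'v,'k) kqmod"
  assumes "kq_module E \<sigma> L" and "kq_module E \<sigma> L'"
    and u: "u \<in> carr L" and spans: "\<forall>y\<in>carr L. \<exists>f\<in>kq_carrier E \<sigma>. y = mact L u f"
    and u': "u' \<in> carr L'"
    and same_kernel: "\<forall>f\<in>kq_carrier E \<sigma>. \<forall>g\<in>kq_carrier E \<sigma>. mact L u f = mact L u g \<longleftrightarrow> mact L' u' f = mact L' u' g"
  shows "mod_hom E \<sigma> L L' (cyclic_transfer E \<sigma> L u L' u')"
proof -
  interpret A: kq_mod V E \<sigma> L by unfold_locales fact
  interpret B: kq_mod V E \<sigma> L' by unfold_locales fact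
  let ?h = "cyclic_transfer E \<sigma> L u L' u'"
  have h: "?h (mact L u f) = mact L' u' f" if "f \<in> kq_carrier E \<sigma>" for f
    using cyclic_transfer_mact[OF same_kernel that] .
  show ?thesis
    unfolding mod_hom_def
  proof (intro conjI ballI allI subsetI)
    fix z assume "z \<in> ?h ` carr L"
    then show "z \<in> carr L'" using spans h B.mact_closed[OF u'] by fastforce
  next
    fix y1 y2 assume "y1 \<in> carr L" "y2 \<in> carr L"
    then obtain f1 f2 where f: "f1 \<in> kq_carrier E \<sigma>" "y1 = mact L u f1" "f2 \<in> kq_carrier E \<sigma>" "y2 = mact L u f2"
      using spans by meson
    then show "?h (madd L y1 y2) = madd L' (?h y1) (?h y2)"
      using A.mact_kq_add[OF u f(1,3), symmetric] B.mact_kq_add[OF u' f(1,3)] h kq_add_carrier[OF f(1,3)] h f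
      by simp
  next
    fix c y assume "y \<in> carr L"
    then obtain f where f: "f \<in> kq_carrier E \<sigma>" "y = mact L u f" using spans by blast
    then have "msmul L c y = mact L u (kq_smul c f)" using A.mact_kq_smul[OF u] by simp
    then show "?h (msmul L c y) = msmul L' c (?h y)"
      using h[OF kq_smul_carrier[OF f(1)]] h[OF f(1)] f B.mact_kq_smul[OF u' f(1)] by simp
  next
    fix y and g :: "('v,'k) kq" assume "y \<in> carr L" and g: "g \<in> kq_carrier E \<sigma>"
    then obtain f where f: "f \<in> kq_carrier E \<sigma>" "y = mact L u f" using spans by blast
    then have "mact L y g = mact L u (kq_mult E \<sigma> f g)" using A.mact_mact[OF u _ g] by simp
    then show "?h (mact L y g) = mact L' (?h y) g"
      using h[OF kq_mult_carrier[OF f(1) g]] h[OF f(1)] f B.mact_mact[OF u' f(1) g] by simp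
  qed
qed

lemma cyclic_mods_iso:
  fixes L :: "('m,'v,'k::field) kqmod" and L' :: "('n,'v,'k) kqmod"
  assumes "kq_module E \<sigma> L" and "kq_module E \<sigma> L'"
    and u: "u \<in> carr L" and spans: "\<forall>y\<in>carr L. \<exists>f\<in>kq_carrier E \<sigma>. y = mact L u f"
    and u': "u' \<in> carr L'" and spans': "\<forall>y\<in>carr L'. \<exists>f\<in>kq_carrier E \<sigma>. y = mact L' u' f"
    and same_kernel: "\<forall>f\<in>kq_carrier E \<sigma>. \<forall>g\<in>kq_carrier E \<sigma>. mact L u f = mact L u g \<longleftrightarrow> mact L' u' f = mact L' u' g"
  shows "mod_iso E \<sigma> L L'"
proof -
  interpret A: kq_mod V E \<sigma> L by unfold_locales fact
  let ?h = "cyclic_transfer E \<sigma> L u L' u'"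
  have hom: "mod_hom E \<sigma> L L' ?h" using cyclic_transfer_hom[OF assms(1-5) same_kernel] .
  have h: "?h (mact L u f) = mact L' u' f" if "f \<in> kq_carrier E \<sigma>" for f
    using cyclic_transfer_mact[OF same_kernel that] .
  have "inj_on ?h (carr L)"
  proof
    fix y1 y2 assume y: "y1 \<in> carr L" "y2 \<in> carr L" and eq: "?h y1 = ?h y2"
    obtain f1 where f1: "f1 \<in> kq_carrier E \<sigma>" "y1 = mact L u f1" using spans y(1) by blast
    obtain f2 where f2: "f2 \<in> kq_carrier E \<sigma>" "y2 = mact L u f2" using spans y(2) by blast
    have "mact L' u' f1 = mact L' u' f2" using eq h[OF f1(1)] h[OF f2(1)] f1 f2 by simp
    then show "y1 = y2" using same_kernel f1 f2 by blast
  qed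
  moreover have "carr L' \<subseteq> ?h ` carr L"
  proof
    fix z assume "z \<in> carr L'"
    then obtain f where f: "f \<in> kq_carrier E \<sigma>" "z = mact L' u' f" using spans' by blast
    then have "z = ?h (mact L u f)" using h by simp
    then show "z \<in> ?h ` carr L" using A.mact_closed[OF u f(1)] by blast
  qed
  moreover have "?h ` carr L \<subseteq> carr L'" using hom by (simp add: mod_hom_def)
  ultimately show ?thesis using hom unfolding mod_iso_def bij_betw_def by blast
qed

end

locale bga_mod = kq_mod V E \<sigma> M for V :: "'v set" and E and \<sigma> and M :: "('m,'v,'k::field) kqmod" +
  assumes annihilated: "bga_module E \<sigma> M"
begin

lemma mact_rel: "x \<in> C \<Longrightarrow> r \<in> bga_rels E \<sigma> \<Longrightarrow> x \<cdot> r = zr"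
  using annihilated kq_ideal.gen[of r "bga_rels E \<sigma>" E \<sigma>] by (auto simp: bga_module_def bga_ideal_def)

lemma mact_cycle_difference:
  assumes x: "x \<in> C" and "card E \<noteq> 1" "s \<in> E" "\<alpha> \<in> s" "\<beta> \<in> s" "\<alpha> \<noteq> \<beta>" "val E \<alpha> \<noteq> 1" "val E \<beta> \<noteq> 1"
  shows "x \<cdot> path_elem (s, cyc E \<sigma> s \<alpha>) = x \<cdot> path_elem (s, cyc E \<sigma> s \<beta>)"
proof -
  have walks: "is_walk E \<sigma> s (cyc E \<sigma> s \<gamma>)" if "\<gamma> \<in> s" "val E \<gamma> \<noteq> 1" for \<gamma>
    using cyc_walk_is_walk[of s \<gamma>] that assms(2,3) by (simp add: cyc_eq_cyc_walk qarrows_def)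
  let ?a = "path_elem (s, cyc E \<sigma> s \<alpha>) :: ('v,'k) kq" and ?b = "path_elem (s, cyc E \<sigma> s \<beta>) :: ('v,'k) kq"
  have a: "?a \<in> kq_carrier E \<sigma>" and b: "?b \<in> kq_carrier E \<sigma>" using walks path_elem_carrier assms by blast+
  have "kq_diff ?a ?b = kq_add ?a (kq_smul (-1) ?b)" by (simp add: kq_diff_def kq_add_def kq_smul_def)
  then have "x \<cdot> ?a \<oplus> (-1) \<odot> (x \<cdot> ?b) = zr"
    using mact_rel[OF x cycle_difference_rel[OF assms(2-8)]] mact_kq_add[OF x a kq_smul_carrier[OF b]]
      mact_kq_smul[OF x b] by simp
  then show ?thesis using eq_if_madd_minus_one_msmul mact_closed[OF x a] mact_closed[OF x b] by blast
qed

lemma mact_path_through_rel: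
  assumes x: "x \<in> C" and v: "is_walk E \<sigma> s (w1 @ [a,b] @ w2)" and r: "(path_elem (asrc a, [a,b]) :: ('v,'k) kq) \<in> bga_rels E \<sigma>"
  shows "x \<cdot> path_elem (s, w1 @ [a,b] @ w2) = zr"
proof -
  have v1: "is_walk E \<sigma> s w1" and v2: "is_walk E \<sigma> (walk_end \<sigma> s w1) ([a,b] @ w2)" using v by (auto simp: is_walk_append)
  have sa: "walk_end \<sigma> s w1 = asrc a" using v2 by simp
  have v3: "is_walk E \<sigma> (walk_end \<sigma> s w1) ([a,b] @ w2)" using v2 by simp
  have x1: "x \<cdot> path_elem (s, w1) \<in> C" using mact_path_closed[OF x v1] .
  have "x \<cdot> path_elem (s, w1 @ [a,b] @ w2) = (x \<cdot> path_elem (s, w1)) \<cdot> path_elem (walk_end \<sigma> s w1, [a,b] @ w2)"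
    using mact_path_append[OF x v] .
  also have "\<dots> = ((x \<cdot> path_elem (s, w1)) \<cdot> path_elem (walk_end \<sigma> s w1, [a,b])) \<cdot> path_elem (walk_end \<sigma> (walk_end \<sigma> s w1) [a,b], w2)"
    using mact_path_append[OF x1 v3] by simp
  also have "(x \<cdot> path_elem (s, w1)) \<cdot> path_elem (walk_end \<sigma> s w1, [a,b]) = zr"
    using mact_rel[OF x1] r sa by simp
  also have "zr \<cdot> path_elem (walk_end \<sigma> (walk_end \<sigma> s w1) [a,b], w2) = zr"
    by (rule mzero_mact, rule path_elem_carrier) (use v3 in \<open>simp add: is_walk_append\<close>)
  finally show ?thesis .
qed

lemma walk_eq_cyc_walk:
  assumes v: "is_walk E \<sigma> t w" and ne: "w \<noteq> []" and h: "hd w = (t, \<alpha>)"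
    and g: "\<forall>i. Suc i < length w \<longrightarrow> w ! Suc i = (\<sigma> (snd (w ! i)) (fst (w ! i)), snd (w ! i))"
  shows "w = cyc_walk \<sigma> t \<alpha> (length w)"
proof (rule nth_equalityI)
  show "length w = length (cyc_walk \<sigma> t \<alpha> (length w))" by (simp add: length_cyc_walk)
  have "\<forall>i. i < length w \<longrightarrow> w ! i = ((\<sigma> \<alpha> ^^ i) t, \<alpha>)"
  proof (intro allI)
    fix i show "i < length w \<longrightarrow> w ! i = ((\<sigma> \<alpha> ^^ i) t, \<alpha>)"
    proof (induction i)
      case 0 then show ?case using h ne by (simp add: hd_conv_nth)
    next
      case (Suc i) then show ?case using g by auto
    qed
  qed
  then show "\<And>i. i < length w \<Longrightarrow> w ! i = cyc_walk \<sigma> t \<alpha> (length w) ! i" by (simp add: cyc_walk_def)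
qed

lemma single_edge_walk_eq_cyc_walk:
  assumes c: "card E = 1" and v: "is_walk E \<sigma> t w" and ne: "w \<noteq> []" and h: "hd w = (t, \<alpha>)"
  shows "w = cyc_walk \<sigma> t \<alpha> (length w)"
proof -
  have "set w \<subseteq> qarrows E" using v
  proof (induction w arbitrary: t)
    case (Cons a w) then show ?case by auto
  qed simp
  then have all: "\<forall>a\<in>set w. a = (single_edge E, SOME \<alpha>. \<alpha> \<in> single_edge E)" using c by (auto simp: qarrows_def)
  then have "hd w = (single_edge E, SOME \<alpha>. \<alpha> \<in> single_edge E)" using ne by simp
  then have ta: "t = single_edge E" "\<alpha> = (SOME \<alpha>. \<alpha> \<in> single_edge E)" using h by auto
  have "\<sigma> \<alpha> t = t" using sigma_single_edge[OF c] single_edge_vertex[OF c] ta by simp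
  show ?thesis
  proof (rule walk_eq_cyc_walk[OF v ne h], intro allI impI)
    fix i assume i: "Suc i < length w"
    then have "w ! i = (t, \<alpha>)" "w ! Suc i = (t, \<alpha>)" using all ta nth_mem[of i w] nth_mem[of "Suc i" w] by auto
    then show "w ! Suc i = (\<sigma> (snd (w ! i)) (fst (w ! i)), snd (w ! i))" using \<open>\<sigma> \<alpha> t = t\<close> by simp
  qed
qed

lemma mact_path_mzero_or_cyc_walk:
  assumes x: "x \<in> C" and v: "is_walk E \<sigma> t w" and ne: "w \<noteq> []" and h: "hd w = (t, \<alpha>)"
  shows "x \<cdot> path_elem (t, w) = zr \<or> w = cyc_walk \<sigma> t \<alpha> (length w)"
proof (cases "card E = 1")
  case True then show ?thesis using single_edge_walk_eq_cyc_walk v ne h by blast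
next
  case c: False
  show ?thesis
  proof (cases "\<forall>i. Suc i < length w \<longrightarrow> w ! Suc i = (\<sigma> (snd (w ! i)) (fst (w ! i)), snd (w ! i))")
    case True then show ?thesis using walk_eq_cyc_walk[OF v ne h] by blast
  next
    case False
    then obtain i where i: "Suc i < length w" "w ! Suc i \<noteq> (\<sigma> (snd (w ! i)) (fst (w ! i)), snd (w ! i))" by blast
    have wsplit: "w = take i w @ [w ! i, w ! Suc i] @ drop (Suc (Suc i)) w"
      using i(1) by (metis Cons_nth_drop_Suc Suc_lessD append_Cons append_Nil append_take_drop_id)
    have "is_walk E \<sigma> t (take i w @ [w ! i, w ! Suc i] @ drop (Suc (Suc i)) w)" using v wsplit by simp
    then have vv: "is_walk E \<sigma> (walk_end \<sigma> t (take i w)) ([w ! i, w ! Suc i] @ drop (Suc (Suc i)) w)" by (simp add: is_walk_append)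
    then have q: "w ! i \<in> qarrows E" "w ! Suc i \<in> qarrows E" "atgt \<sigma> (w ! i) = asrc (w ! Suc i)" by auto
    have r: "(path_elem (asrc (w ! i), [w ! i, w ! Suc i]) :: ('v,'k) kq) \<in> bga_rels E \<sigma>"
      using non_cycle_pair_rel[OF c q i(2)] .
    have "x \<cdot> path_elem (t, take i w @ [w ! i, w ! Suc i] @ drop (Suc (Suc i)) w) = zr"
      by (rule mact_path_through_rel[OF x _ r]) (use v wsplit in simp)
    then show ?thesis using wsplit by simp
  qed
qed

end

locale uniserial_mod = bga_mod V E \<sigma> M for V :: "'v set" and E and \<sigma> and M :: "('m,'v,'k::field) kqmod" +
  assumes uniserial: "uniserial E \<sigma> M"
begin

lemma carrier_nontrivial: "C \<noteq> {zr}" using uniserial by (simp add: uniserial_def)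
lemma submod_chain: "sub N \<Longrightarrow> sub N' \<Longrightarrow> N \<subseteq> N' \<or> N' \<subseteq> N" using uniserial by (simp add: uniserial_def)

lemma idem_generator_exists: "\<exists>u s. s \<in> E \<and> u \<in> C \<and> u \<cdot> idem s = u \<and> cyc_submod u = C \<and> u \<noteq> zr"
proof -
  obtain bs where bs: "set bs \<subseteq> C" "\<forall>x\<in>C. \<exists>cs. length cs = length bs \<and> x = lincomb M cs bs"
    using finite_spanning_list by blast
  have "bs \<noteq> []"
  proof
    assume "bs = []"
    then have "\<forall>x\<in>C. x = zr" using bs by (simp add: lincomb_def)
    then show False using carrier_nontrivial mzero_closed by blast
  qed
  define F where "F = (\<lambda>(b, t). cyc_submod (b \<cdot> idem t)) ` (set bs \<times> E)"
  have idem_parts: "b \<cdot> idem t \<in> C" if "b \<in> set bs" "t \<in> E" for b t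
    using that bs mact_closed idem_carrier[where 'k='k] by blast
  have F_sub: "\<forall>A\<in>F. sub A" using idem_parts submod_cyc_submod unfolding F_def by auto
  have fin: "finite F" and ne: "F \<noteq> {}" using finite_edges \<open>bs \<noteq> []\<close> edges_nonempty unfolding F_def by auto
  have "\<forall>A\<in>F. \<forall>B\<in>F. A \<subseteq> B \<or> B \<subseteq> A" using F_sub submod_chain by blast
  then obtain X where X: "X \<in> F" "\<forall>A\<in>F. A \<subseteq> X" using finite_chain_has_max[OF fin ne] by blast
  then obtain b0 t0 where b0: "b0 \<in> set bs" "t0 \<in> E" "X = cyc_submod (b0 \<cdot> idem t0)"
    unfolding F_def by auto
  have "b \<cdot> idem t \<in> X" if "b \<in> set bs" "t \<in> E" for b t
    using X(2) mem_cyc_submod[OF idem_parts[OF that]] that unfolding F_def by blast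
  then have "X = C" using submod_eq_carrier_if_idem_components[OF _ bs] F_sub X(1) by blast
  define u where "u = b0 \<cdot> idem t0"
  have gen: "cyc_submod u = C" using \<open>X = C\<close> b0(3) u_def by simp
  then have "u \<noteq> zr" using cyc_submod_mzero carrier_nontrivial by auto
  moreover have "u \<cdot> idem t0 = u"
    using mact_path_idem[of b0 t0 "[]" t0] b0 bs u_def by (auto simp: idem_def)
  ultimately show ?thesis using gen idem_parts[OF b0(1,2)] b0(2) u_def by blast
qed

end

locale uniserial_gen = uniserial_mod V E \<sigma> M for V :: "'v set" and E and \<sigma> and M :: "('m,'v,'k::field) kqmod" +
  fixes u s
  assumes sE: "s \<in> E" and uC: "u \<in> C" and u_idem: "u \<cdot> idem s = u" and u_generates: "cyc_submod u = C" and u_nonzero: "u \<noteq> zr"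
begin

lemma gen_mact_path_off: "is_walk E \<sigma> t w \<Longrightarrow> t \<noteq> s \<Longrightarrow> u \<cdot> path_elem (t, w) = zr"
  using mact_path_off_idem[OF uC sE u_idem] by blast

lemma gen_mact_path_Cons: "is_walk E \<sigma> s (a # w) \<Longrightarrow> u \<cdot> path_elem (s, a # w) = (u \<cdot> path_elem (s, [a])) \<cdot> path_elem (atgt \<sigma> a, w)"
  using mact_path_append[OF uC, of s "[a]" w] by simp

lemma arrow_then_path_idem_other:
  assumes c: "card E \<noteq> 1" and qg: "(s, \<gamma>) \<in> qarrows E" and qd: "(s, \<delta>) \<in> qarrows E" and "\<gamma> \<noteq> \<delta>"
    and walk: "is_walk E \<sigma> t w"
  shows "((u \<cdot> path_elem (s, [(s, \<gamma>)])) \<cdot> path_elem (t, w)) \<cdot> idem (\<sigma> \<delta> s) = zr"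
proof (cases "\<sigma> \<gamma> s = t")
  case False
  have "(idem (\<sigma> \<delta> s) :: ('v,'k) kq) \<in> kq_carrier E \<sigma>" using idem_carrier sigma_edge qarrow_mem qd by blast
  then show ?thesis
    using mact_path_path[OF uC qarrow_is_walk[OF qg] walk] mzero_mact False by (simp add: atgt_def)
next
  case True
  let ?w = "(s, \<gamma>) # w"
  have walk': "is_walk E \<sigma> s ?w" using qarrow_is_walk[OF qg] walk True by (simp add: atgt_def)
  have "u \<cdot> path_elem (s, ?w) = zr" if ends: "walk_end \<sigma> s ?w = \<sigma> \<delta> s"
  proof -
    have "?w \<noteq> cyc_walk \<sigma> s \<gamma> (length ?w)"
      using cyc_walk_is_walk[OF qg] sigma_pow_ne_sigma_other[OF c qg qd \<open>\<gamma> \<noteq> \<delta>\<close>] ends by metis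
    then show ?thesis using mact_path_mzero_or_cyc_walk[OF uC walk'] by simp
  qed
  then show ?thesis
    using mact_path_path[OF uC qarrow_is_walk[OF qg] walk] mact_path_idem[OF uC walk'] True
      sigma_edge qarrow_mem qd by (simp add: atgt_def)
qed

lemma arrow_branches_orthogonal:
  assumes c: "card E \<noteq> 1" and qg: "(s, \<gamma>) \<in> qarrows E" and qd: "(s, \<delta>) \<in> qarrows E" and "\<gamma> \<noteq> \<delta>"
    and g: "g \<in> kq_carrier E \<sigma>"
  shows "((u \<cdot> path_elem (s, [(s, \<gamma>)])) \<cdot> g) \<cdot> idem (\<sigma> \<delta> s) = zr"
proof -
  let ?e = "idem (\<sigma> \<delta> s) :: ('v,'k) kq"
  have e: "?e \<in> kq_carrier E \<sigma>" using idem_carrier sigma_edge qarrow_mem qd by blast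
  have "(a \<oplus> c \<odot> b) \<cdot> ?e = zr" if "a \<in> C" "a \<cdot> ?e = zr" "b \<in> C" "b \<cdot> ?e = zr" for a b c
    using that madd_mact[OF that(1) msmul_closed[OF that(3)] e] msmul_mact[OF that(3) e] msmul_mzero mzero_madd mzero_closed
    by simp
  then have "(u \<cdot> path_elem (s, [(s, \<gamma>)])) \<cdot> g \<in> {v \<in> C. v \<cdot> ?e = zr}"
    using madd_closed msmul_closed
    by (intro mact_mem_subspace[OF mact_path_closed[OF uC qarrow_is_walk[OF qg]] g])
      (simp_all add: mzero_closed mzero_mact[OF e] arrow_then_path_idem_other[OF assms(1-4)]
        mact_path_closed[OF mact_path_closed[OF uC qarrow_is_walk[OF qg]]])
  then show ?thesis by simp
qed

lemma gen_arrow_idem: "(s, \<gamma>) \<in> qarrows E \<Longrightarrow> (u \<cdot> path_elem (s, [(s, \<gamma>)])) \<cdot> idem (\<sigma> \<gamma> s) = u \<cdot> path_elem (s, [(s, \<gamma>)])"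
  using mact_path_idem[OF uC qarrow_is_walk] sigma_edge qarrow_mem by (simp add: atgt_def)

lemma unique_active_arrow:
  assumes alpha_arrow: "(s,\<alpha>) \<in> qarrows E" and nz: "u \<cdot> path_elem (s,[(s,\<alpha>)]) \<noteq> zr"
    and qb: "(s,\<beta>) \<in> qarrows E" and ab: "\<beta> \<noteq> \<alpha>"
  shows "u \<cdot> path_elem (s,[(s,\<beta>)]) = zr"
proof -
  have c: "card E \<noteq> 1"
  proof
    assume "card E = 1"
    then show False using alpha_arrow qb ab by (simp add: qarrows_def)
  qed
  define ya where "ya = u \<cdot> path_elem (s,[(s,\<alpha>)])"
  define yb where "yb = u \<cdot> path_elem (s,[(s,\<beta>)])"
  have va: "is_walk E \<sigma> s [(s,\<alpha>)]" using alpha_arrow atgt_in_edges sE by (simp add: asrc_def)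
  have vb: "is_walk E \<sigma> s [(s,\<beta>)]" using qb atgt_in_edges sE by (simp add: asrc_def)
  have yaC: "ya \<in> C" using ya_def mact_path_closed[OF uC va] by simp
  have ybC: "yb \<in> C" using yb_def mact_path_closed[OF uC vb] by simp
  have "cyc_submod ya \<subseteq> cyc_submod yb \<or> cyc_submod yb \<subseteq> cyc_submod ya" using submod_chain submod_cyc_submod yaC ybC by blast
  then show ?thesis
  proof
    assume "cyc_submod ya \<subseteq> cyc_submod yb"
    then have "ya \<in> cyc_submod yb" using mem_cyc_submod yaC by blast
    then obtain g where g: "g \<in> kq_carrier E \<sigma>" "ya = yb \<cdot> g" by (auto simp: cyc_submod_def)
    have "ya = ya \<cdot> idem (\<sigma> \<alpha> s)" using gen_arrow_idem[OF alpha_arrow] ya_def by simp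
    also have "\<dots> = zr" using arrow_branches_orthogonal[OF c qb alpha_arrow _ g(1)] ab g(2) yb_def by simp
    finally show ?thesis using nz ya_def by simp
  next
    assume "cyc_submod yb \<subseteq> cyc_submod ya"
    then have "yb \<in> cyc_submod ya" using mem_cyc_submod ybC by blast
    then obtain g where g: "g \<in> kq_carrier E \<sigma>" "yb = ya \<cdot> g" by (auto simp: cyc_submod_def)
    have "yb = yb \<cdot> idem (\<sigma> \<beta> s)" using gen_arrow_idem[OF qb] yb_def by simp
    also have "\<dots> = zr" using arrow_branches_orthogonal[OF c alpha_arrow qb _ g(1)] ab g(2) ya_def by simp
    finally show ?thesis using yb_def by simp
  qed
qed

lemma gen_mact_path_if_no_active_arrow:
  assumes none: "\<forall>\<beta>. (s, \<beta>) \<in> qarrows E \<longrightarrow> u \<cdot> path_elem (s, [(s, \<beta>)]) = zr"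
    and walk: "is_walk E \<sigma> t w"
  shows "u \<cdot> path_elem (t, w) = (if t = s \<and> w = [] then u else zr)"
proof (cases "t = s")
  case True
  show ?thesis
  proof (cases w)
    case Nil then show ?thesis using True u_idem by (simp add: idem_def)
  next
    case (Cons a w')
    then have a: "a \<in> qarrows E" "a = (s, snd a)" using walk True by (auto simp: asrc_def)
    then have "u \<cdot> path_elem (s, [a]) = zr" using none by metis
    then show ?thesis
      using gen_mact_path_Cons walk True Cons mzero_mact_path by simp
  qed
qed (use gen_mact_path_off[OF walk] in simp)

lemma gen_mact_if_no_active_arrow:
  assumes none: "\<forall>\<beta>. (s, \<beta>) \<in> qarrows E \<longrightarrow> u \<cdot> path_elem (s, [(s, \<beta>)]) = zr"
    and f: "f \<in> kq_carrier E \<sigma>"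
  shows "u \<cdot> f = f (s, []) \<odot> u"
  using f
proof (induction rule: kq_carrier_induct)
  case zero
  then show ?case using mact_kq_zero[OF uC] zero_msmul[OF uC] by (simp add: kq_zero_def)
next
  case (step g t w c)
  have p: "path_elem (t, w) \<in> kq_carrier E \<sigma>" using path_elem_carrier[OF step.hyps(2)] .
  have "u \<cdot> kq_add g (kq_smul c (path_elem (t, w))) = g (s, []) \<odot> u \<oplus> c \<odot> (if t = s \<and> w = [] then u else zr)"
    using mact_kq_add[OF uC step.hyps(1) kq_smul_carrier[OF p]] mact_kq_smul[OF uC p] step.IH
      gen_mact_path_if_no_active_arrow[OF none step.hyps(2)] by simp
  also have "\<dots> = (kq_add g (kq_smul c (path_elem (t, w)))) (s, []) \<odot> u"
  proof (cases "t = s \<and> w = []")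
    case True
    then show ?thesis using add_msmul[OF uC, of "g (s, [])" c] by (auto simp: kq_add_def kq_smul_def path_elem_def)
  next
    case False
    then show ?thesis using msmul_mzero madd_mzero msmul_closed[OF uC] by (auto simp: kq_add_def kq_smul_def path_elem_def)
  qed
  finally show ?case .
qed

lemma simple_if_no_active_arrow:
  assumes "\<forall>\<beta>. (s, \<beta>) \<in> qarrows E \<longrightarrow> u \<cdot> path_elem (s, [(s, \<beta>)]) = zr"
  shows "simple_mod E \<sigma> M"
proof -
  have "C = {c \<odot> u | c. True}"
  proof
    show "C \<subseteq> {c \<odot> u | c. True}"
    proof
      fix y assume "y \<in> C"
      then obtain f where "f \<in> kq_carrier E \<sigma>" "y = u \<cdot> f" using u_generates by (auto simp: cyc_submod_def)
      then show "y \<in> {c \<odot> u | c. True}" using gen_mact_if_no_active_arrow[OF assms] by blast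
    qed
  qed (use msmul_closed uC in blast)
  then show ?thesis using simple_mod_line[OF uC u_nonzero] restr_carrier by metis
qed

end

section \<open>String modules\<close>

locale string_mod = uniserial_gen V E \<sigma> M u s for V :: "'v set" and E and \<sigma> and M :: "('m,'v,'k::field) kqmod" and u s +
  fixes \<alpha>
  assumes alpha_arrow: "(s,\<alpha>) \<in> qarrows E" and alpha_active: "u \<cdot> path_elem (s,[(s,\<alpha>)]) \<noteq> zr"
begin

definition bvec :: "nat \<Rightarrow> 'm" where "bvec k = u \<cdot> path_elem (s, cyc_walk \<sigma> s \<alpha> k)"

lemma cyc_walk_walk: "is_walk E \<sigma> s (cyc_walk \<sigma> s \<alpha> k)" using cyc_walk_is_walk[OF alpha_arrow] by blast
lemma cyc_walk_end: "walk_end \<sigma> s (cyc_walk \<sigma> s \<alpha> k) = (\<sigma> \<alpha> ^^ k) s" using cyc_walk_is_walk[OF alpha_arrow] by blast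
lemma bvec_closed: "bvec k \<in> C" unfolding bvec_def using mact_path_closed[OF uC cyc_walk_walk] .
lemma bvec_closed_all: "\<forall>k. bvec k \<in> C" using bvec_closed by blast
lemma bvec_0: "bvec 0 = u" using u_idem by (simp add: bvec_def cyc_walk_def idem_def)
lemma alpha_mem: "\<alpha> \<in> s" using alpha_arrow qarrow_mem by blast

lemma bvec_add: "bvec (k + m) = bvec k \<cdot> path_elem ((\<sigma> \<alpha> ^^ k) s, cyc_walk \<sigma> ((\<sigma> \<alpha> ^^ k) s) \<alpha> m)"
proof -
  have "bvec (k + m) = u \<cdot> path_elem (s, cyc_walk \<sigma> s \<alpha> k @ cyc_walk \<sigma> ((\<sigma> \<alpha> ^^ k) s) \<alpha> m)" by (simp add: bvec_def cyc_walk_add)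
  also have "\<dots> = bvec k \<cdot> path_elem ((\<sigma> \<alpha> ^^ k) s, cyc_walk \<sigma> ((\<sigma> \<alpha> ^^ k) s) \<alpha> m)"
    using mact_path_append[OF uC, of s "cyc_walk \<sigma> s \<alpha> k" "cyc_walk \<sigma> ((\<sigma> \<alpha> ^^ k) s) \<alpha> m"] cyc_walk_walk[of "k+m"] cyc_walk_end[of k]
    by (simp add: bvec_def cyc_walk_add)
  finally show ?thesis .
qed

lemma cyc_walk_walk_from: "is_walk E \<sigma> ((\<sigma> \<alpha> ^^ k) s) (cyc_walk \<sigma> ((\<sigma> \<alpha> ^^ k) s) \<alpha> m)"
  using cyc_walk_is_walk[OF qarrow_sigma_pow[OF alpha_arrow]] by blast

lemma bvec_mzero_mono: "bvec k = zr \<Longrightarrow> k \<le> j \<Longrightarrow> bvec j = zr"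
proof -
  assume a: "bvec k = zr" "k \<le> j"
  then obtain m where "j = k + m" using le_Suc_ex by blast
  then show ?thesis using bvec_add a mzero_mact_path[OF cyc_walk_walk_from] by simp
qed

lemma gen_mact_path: "is_walk E \<sigma> t w \<Longrightarrow> u \<cdot> path_elem (t,w) = (if t = s \<and> w = cyc_walk \<sigma> s \<alpha> (length w) then bvec (length w) else zr)"
proof -
  assume v: "is_walk E \<sigma> t w"
  show ?thesis
  proof (cases "t = s \<and> w = cyc_walk \<sigma> s \<alpha> (length w)")
    case True then show ?thesis by (simp add: bvec_def)
  next
    case nt: False
    show ?thesis
    proof (cases "t = s")
      case False then show ?thesis using gen_mact_path_off[OF v] by simp
    next
      case True
      show ?thesis
      proof (cases w)
        case Nil then show ?thesis using nt True by (simp add: cyc_walk_def)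
      next
        case (Cons a w')
        have a: "a \<in> qarrows E" "fst a = s" using v True Cons by (auto simp: asrc_def)
        then have a2: "a = (s, snd a)" by (cases a) simp
        show ?thesis
        proof (cases "snd a = \<alpha>")
          case False
          have "u \<cdot> path_elem (s,[a]) = zr" using unique_active_arrow[OF alpha_arrow alpha_active, of "snd a"] a a2 False by metis
          moreover have "is_walk E \<sigma> (atgt \<sigma> a) w'" using v True Cons by simp
          ultimately show ?thesis using gen_mact_path_Cons v True Cons mzero_mact_path nt by simp
        next
          case sa: True
          have "u \<cdot> path_elem (t, w) = zr \<or> w = cyc_walk \<sigma> t \<alpha> (length w)"
            by (rule mact_path_mzero_or_cyc_walk[OF uC v]) (use Cons a2 sa True in auto)
          then show ?thesis using nt True by auto
        qed
      qed
    qed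
  qed
qed

lemma gen_mact_path_cases: "is_walk E \<sigma> t w \<Longrightarrow> u \<cdot> path_elem (t,w) = zr \<or> u \<cdot> path_elem (t,w) = bvec (length w)"
  using gen_mact_path by metis

lemma bvec_val_mzero:
  assumes c: "card E \<noteq> 1" and qb: "(s, \<beta>) \<in> qarrows E" and "\<beta> \<noteq> \<alpha>"
  shows "bvec (val E \<alpha>) = zr"
proof -
  have \<beta>: "\<beta> \<in> s" "val E \<beta> \<noteq> 1" "val E \<alpha> \<noteq> 1" using alpha_arrow qb c by (auto simp: qarrows_def)
  obtain rest where rest: "cyc E \<sigma> s \<beta> = (s, \<beta>) # rest"
    using val_pos[OF sE \<beta>(1)] by (simp add: cyc_eq_cyc_walk cyc_walk_def upt_conv_Cons)
  have walk: "is_walk E \<sigma> s ((s, \<beta>) # rest)"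
    using cyc_walk_is_walk[OF qb, of "val E \<beta>"] rest by (simp add: cyc_eq_cyc_walk)
  then have "u \<cdot> path_elem (s, cyc E \<sigma> s \<beta>) = zr"
    using gen_mact_path_Cons[OF walk] unique_active_arrow[OF alpha_arrow alpha_active qb \<open>\<beta> \<noteq> \<alpha>\<close>] mzero_mact_path rest by simp
  then show ?thesis
    using mact_cycle_difference[OF uC c sE alpha_mem \<beta>(1) \<open>\<beta> \<noteq> \<alpha>\<close>[symmetric] \<beta>(3) \<beta>(2)]
    by (simp add: bvec_def cyc_eq_cyc_walk)
qed

lemma bvec_Suc_val_single_edge: "card E = 1 \<Longrightarrow> bvec (Suc (val E \<alpha>)) = zr"
proof -
  assume c: "card E = 1"
  have s: "s = single_edge E" "\<alpha> = (SOME \<alpha>. \<alpha> \<in> single_edge E)" using alpha_arrow c by (auto simp: qarrows_def)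
  then have loop: "\<sigma> \<alpha> s = s" using sigma_single_edge[OF c] alpha_mem by simp
  then have "cyc_walk \<sigma> s \<alpha> 2 = [] @ [(s, \<alpha>), (s, \<alpha>)] @ []" by (simp add: cyc_walk_def numeral_2_eq_2)
  moreover have "(path_elem (asrc (s, \<alpha>), [(s, \<alpha>), (s, \<alpha>)]) :: ('v,'k) kq) \<in> bga_rels E \<sigma>"
    using single_edge_rel[OF c, of "(s, \<alpha>)"] s by (simp add: asrc_def)
  ultimately have "bvec 2 = zr"
    unfolding bvec_def using mact_path_through_rel[OF uC, of s "[]" "(s, \<alpha>)" "(s, \<alpha>)" "[]"] cyc_walk_walk[of 2] loop
    by (simp add: atgt_def)
  then show ?thesis using val_single_edge[OF c sE alpha_mem] by (simp add: numeral_2_eq_2)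
qed

lemma bvec_Suc_val_mzero: "bvec (Suc (val E \<alpha>)) = zr"
proof (cases "card E = 1")
  case False
  obtain \<beta> where \<beta>: "\<beta> \<in> s" "\<beta> \<noteq> \<alpha>" using other_endpoint[OF sE alpha_mem] by blast
  show ?thesis
  proof (cases "val E \<beta> = 1")
    case True
    have "hd (cyc E \<sigma> s \<alpha>) = (s, \<alpha>)"
      using val_pos[OF sE alpha_mem] by (simp add: cyc_eq_cyc_walk cyc_walk_def hd_map upt_conv_Cons)
    then have "cyc_walk \<sigma> s \<alpha> (Suc (val E \<alpha>)) = cyc E \<sigma> s \<alpha> @ [hd (cyc E \<sigma> s \<alpha>)]"
      using sigma_pow_val[OF sE alpha_mem] by (simp add: cyc_walk_Suc cyc_eq_cyc_walk)
    then show ?thesis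
      using mact_rel[OF uC truncated_cycle_rel[OF False sE alpha_mem \<beta>(1) \<beta>(2)[symmetric] True]]
      by (simp add: bvec_def)
  next
    case True: False
    then have "(s, \<beta>) \<in> qarrows E" using False sE \<beta> by (simp add: qarrows_def)
    then show ?thesis using bvec_val_mzero[OF False _ \<beta>(2)] bvec_mzero_mono by simp
  qed
qed (use bvec_Suc_val_single_edge in blast)

definition len where "len = (LEAST k. bvec k = zr)"

lemma bvec_len: "bvec len = zr" unfolding len_def by (rule LeastI[of _ "Suc (val E \<alpha>)"]) (rule bvec_Suc_val_mzero)
lemma len_le_Suc_val: "len \<le> Suc (val E \<alpha>)" unfolding len_def by (rule Least_le) (rule bvec_Suc_val_mzero)
lemma len_le_val: "card E \<noteq> 1 \<Longrightarrow> (s,\<beta>) \<in> qarrows E \<Longrightarrow> \<beta> \<noteq> \<alpha> \<Longrightarrow> len \<le> val E \<alpha>"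
  unfolding len_def by (rule Least_le) (rule bvec_val_mzero)
lemma bvec_nonzero: "k < len \<Longrightarrow> bvec k \<noteq> zr" unfolding len_def using not_less_Least by blast
lemma bvec_mzero: "len \<le> k \<Longrightarrow> bvec k = zr" using bvec_mzero_mono bvec_len by blast
lemma len_pos: "0 < len" using bvec_0 u_nonzero bvec_len by (cases len) auto

lemma bvec_mact_path: "is_walk E \<sigma> t w \<Longrightarrow> bvec k \<cdot> path_elem (t,w) = zr \<or> bvec k \<cdot> path_elem (t,w) = bvec (k + length w)"
proof -
  assume v: "is_walk E \<sigma> t w"
  have e1: "bvec k \<cdot> path_elem (t,w) = u \<cdot> kq_mult E \<sigma> (path_elem (s, cyc_walk \<sigma> s \<alpha> k)) (path_elem (t,w))"
    unfolding bvec_def using mact_mact[OF uC path_elem_carrier[OF cyc_walk_walk] path_elem_carrier[OF v]] .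
  show ?thesis
  proof (cases "(\<sigma> \<alpha> ^^ k) s = t")
    case True
    then have "kq_mult E \<sigma> (path_elem (s, cyc_walk \<sigma> s \<alpha> k)) (path_elem (t,w)) = (path_elem (s, cyc_walk \<sigma> s \<alpha> k @ w) :: ('v,'k) kq)"
      using kq_mult_path_elem[OF cyc_walk_walk[of k] v] cyc_walk_end[of k] by simp
    moreover have "is_walk E \<sigma> s (cyc_walk \<sigma> s \<alpha> k @ w)" using cyc_walk_walk v True cyc_walk_end by (simp add: is_walk_append)
    ultimately show ?thesis using e1 gen_mact_path_cases[of s "cyc_walk \<sigma> s \<alpha> k @ w"] by (simp add: length_cyc_walk)
  next
    case False
    then have "kq_mult E \<sigma> (path_elem (s, cyc_walk \<sigma> s \<alpha> k)) (path_elem (t,w)) = (kq_zero :: ('v,'k) kq)"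
      using kq_mult_path_elem[OF cyc_walk_walk[of k] v] cyc_walk_end[of k] by simp
    then show ?thesis using e1 mact_kq_zero[OF uC] by simp
  qed
qed

lemma lcomb_path_elem: "is_walk E \<sigma> t w \<Longrightarrow> lcomb bvec (\<lambda>k. path_elem (t,w) (s, cyc_walk \<sigma> s \<alpha> k)) len = u \<cdot> path_elem (t,w)"
proof -
  assume v: "is_walk E \<sigma> t w"
  show ?thesis
  proof (cases "t = s \<and> w = cyc_walk \<sigma> s \<alpha> (length w)")
    case True
    have "(\<lambda>k. (path_elem (t,w) :: ('v,'k) kq) (s, cyc_walk \<sigma> s \<alpha> k)) = (\<lambda>k. if k = length w then 1 else 0)"
    proof
      fix k show "(path_elem (t,w) :: ('v,'k) kq) (s, cyc_walk \<sigma> s \<alpha> k) = (if k = length w then 1 else 0)"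
        using True length_cyc_walk[of \<sigma> s \<alpha> k] by (auto simp: path_elem_def)
    qed
    then show ?thesis using lcomb_delta[OF bvec_closed_all] gen_mact_path[OF v] True bvec_mzero by auto
  next
    case False
    have "\<forall>k<len. (path_elem (t,w) :: ('v,'k) kq) (s, cyc_walk \<sigma> s \<alpha> k) = 0"
      using False length_cyc_walk by (auto simp: path_elem_def)
    then show ?thesis using lcomb_zero[OF bvec_closed_all] gen_mact_path[OF v] False by simp
  qed
qed

lemma gen_mact_expansion: "f \<in> kq_carrier E \<sigma> \<Longrightarrow> u \<cdot> f = lcomb bvec (\<lambda>k. f (s, cyc_walk \<sigma> s \<alpha> k)) len"
proof -
  assume f: "f \<in> kq_carrier E \<sigma>"
  show ?thesis
  proof (rule kq_carrier_induct[OF f, where Q="\<lambda>g. u \<cdot> g = lcomb bvec (\<lambda>k. g (s, cyc_walk \<sigma> s \<alpha> k)) len"])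
    show "u \<cdot> kq_zero = lcomb bvec (\<lambda>k. kq_zero (s, cyc_walk \<sigma> s \<alpha> k)) len"
      using mact_kq_zero[OF uC] lcomb_zero[OF bvec_closed_all] by (simp add: kq_zero_def)
  next
    fix g t w c
    assume g: "g \<in> kq_carrier E \<sigma>" and IH: "u \<cdot> g = lcomb bvec (\<lambda>k. g (s, cyc_walk \<sigma> s \<alpha> k)) len" and v: "is_walk E \<sigma> t w"
    have pc: "path_elem (t,w) \<in> kq_carrier E \<sigma>" using path_elem_carrier[OF v] .
    have "u \<cdot> kq_add g (kq_smul c (path_elem (t, w))) = lcomb bvec (\<lambda>k. g (s, cyc_walk \<sigma> s \<alpha> k)) len \<oplus> c \<odot> lcomb bvec (\<lambda>k. path_elem (t,w) (s, cyc_walk \<sigma> s \<alpha> k)) len"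
      using mact_kq_add[OF uC g kq_smul_carrier[OF pc]] mact_kq_smul[OF uC pc] IH lcomb_path_elem[OF v] by simp
    also have "\<dots> = lcomb bvec (\<lambda>k. g (s, cyc_walk \<sigma> s \<alpha> k)) len \<oplus> lcomb bvec (\<lambda>k. c * path_elem (t,w) (s, cyc_walk \<sigma> s \<alpha> k)) len"
      using msmul_lcomb[OF bvec_closed_all] by simp
    also have "\<dots> = lcomb bvec (\<lambda>k. (kq_add g (kq_smul c (path_elem (t, w)))) (s, cyc_walk \<sigma> s \<alpha> k)) len"
      using lcomb_add[OF bvec_closed_all, symmetric] by (simp add: kq_add_def kq_smul_def)
    finally show "u \<cdot> kq_add g (kq_smul c (path_elem (t, w))) = lcomb bvec (\<lambda>k. (kq_add g (kq_smul c (path_elem (t, w)))) (s, cyc_walk \<sigma> s \<alpha> k)) len" .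
  qed
qed

lemma bvec_independent: "lcomb bvec c len = zr \<Longrightarrow> k < len \<Longrightarrow> c k = 0"
proof (rule ccontr)
  assume lz: "lcomb bvec c len = zr" and kn: "k < len" and ck: "c k \<noteq> 0"
  define j where "j = (LEAST k. k < len \<and> c k \<noteq> 0)"
  have j: "j < len" "c j \<noteq> 0" using LeastI[of "\<lambda>k. k < len \<and> c k \<noteq> 0" k] kn ck j_def by auto
  have jlow: "\<forall>k<j. c k = 0"
  proof (intro allI impI)
    fix k assume kj: "k < j"
    then have "\<not> (k < len \<and> c k \<noteq> 0)" using not_less_Least[of k "\<lambda>k. k < len \<and> c k \<noteq> 0"] j_def by blast
    then show "c k = 0" using kj j(1) by simp
  qed
  define m where "m = len - 1 - j"
  define T where "T = (path_elem ((\<sigma> \<alpha> ^^ j) s, cyc_walk \<sigma> ((\<sigma> \<alpha> ^^ j) s) \<alpha> m) :: ('v,'k) kq)"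
  have vT: "is_walk E \<sigma> ((\<sigma> \<alpha> ^^ j) s) (cyc_walk \<sigma> ((\<sigma> \<alpha> ^^ j) s) \<alpha> m)" using cyc_walk_walk_from .
  have Tc: "T \<in> kq_carrier E \<sigma>" unfolding T_def using path_elem_carrier[OF vT] .
  have yC: "\<forall>k. bvec k \<cdot> T \<in> C" using bvec_closed mact_closed Tc by blast
  have "lcomb (\<lambda>k. bvec k \<cdot> T) c len = zr" using lcomb_mact[OF bvec_closed_all Tc, of c len] lz mzero_mact[OF Tc] by metis
  moreover have "\<forall>k. j < k \<and> k < len \<longrightarrow> bvec k \<cdot> T = zr"
  proof (intro allI impI)
    fix k assume "j < k \<and> k < len"
    then have "len \<le> k + length (cyc_walk \<sigma> ((\<sigma> \<alpha> ^^ j) s) \<alpha> m)" unfolding length_cyc_walk m_def by arith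
    then show "bvec k \<cdot> T = zr" using bvec_mact_path[OF vT, of k] bvec_mzero unfolding T_def by auto
  qed
  ultimately have "c j \<odot> (bvec j \<cdot> T) = zr" using lcomb_single_survivor[OF yC j(1) jlow] by simp
  moreover have "bvec j \<cdot> T = bvec (len - 1)" unfolding T_def using bvec_add[of j m] j by (simp add: m_def)
  ultimately have "bvec (len - 1) = zr" using msmul_eq_mzero_imp[OF bvec_closed j(2)] by simp
  then show False using bvec_nonzero[of "len - 1"] len_pos by simp
qed

definition layer :: "nat \<Rightarrow> 'm set" where "layer j = {lcomb bvec c len | c. \<forall>k<j. c k = 0}"

lemma layer_subset: "layer j \<subseteq> C" using lcomb_closed[OF bvec_closed_all] by (auto simp: layer_def)

lemma mzero_layer: "zr \<in> layer j"
proof -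
  have "lcomb bvec (\<lambda>k. 0) len = zr" using lcomb_zero[OF bvec_closed_all] by simp
  then show ?thesis unfolding layer_def by force
qed

lemma madd_layer: "y \<in> layer j \<Longrightarrow> y' \<in> layer j \<Longrightarrow> y \<oplus> y' \<in> layer j"
proof -
  assume "y \<in> layer j" "y' \<in> layer j"
  then obtain c d where cd: "y = lcomb bvec c len" "\<forall>k<j. c k = 0" "y' = lcomb bvec d len" "\<forall>k<j. d k = 0" by (auto simp: layer_def)
  then have "y \<oplus> y' = lcomb bvec (\<lambda>k. c k + d k) len" using lcomb_add[OF bvec_closed_all, of c d len] by simp
  moreover have "\<forall>k<j. c k + d k = 0" using cd by simp
  ultimately show ?thesis unfolding layer_def by blast
qed

lemma msmul_layer: "y \<in> layer j \<Longrightarrow> e \<odot> y \<in> layer j"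
proof -
  assume "y \<in> layer j"
  then obtain c where cd: "y = lcomb bvec c len" "\<forall>k<j. c k = 0" by (auto simp: layer_def)
  then have "e \<odot> y = lcomb bvec (\<lambda>k. e * c k) len" using msmul_lcomb[OF bvec_closed_all, of e c len] by simp
  moreover have "\<forall>k<j. e * c k = 0" using cd by simp
  ultimately show ?thesis unfolding layer_def by blast
qed

lemma layer_antimono: "j \<le> j' \<Longrightarrow> layer j' \<subseteq> layer j" by (auto simp: layer_def)

lemma bvec_in_layer: "j \<le> m \<Longrightarrow> bvec m \<in> layer j"
proof (cases "m < len")
  case True
  assume "j \<le> m"
  then have "lcomb bvec (\<lambda>k. if k = m then 1 else 0) len \<in> layer j" unfolding layer_def by force
  then show ?thesis using lcomb_delta[OF bvec_closed_all, of m len] True by simp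
next
  case False
  then show ?thesis using bvec_mzero mzero_layer by simp
qed

lemma bvec_mact_layer: "f \<in> kq_carrier E \<sigma> \<Longrightarrow> bvec k \<cdot> f \<in> layer k"
proof (rule mact_mem_subspace[OF bvec_closed])
  fix t w assume "is_walk E \<sigma> t w"
  then show "bvec k \<cdot> path_elem (t, w) \<in> layer k"
    using bvec_mact_path[OF \<open>is_walk E \<sigma> t w\<close>, of k] by (elim disjE) (simp_all add: mzero_layer bvec_in_layer)
qed (use mzero_layer madd_layer msmul_layer in auto)

lemma mact_layer: "y \<in> layer j \<Longrightarrow> f \<in> kq_carrier E \<sigma> \<Longrightarrow> y \<cdot> f \<in> layer j"
proof -
  assume y: "y \<in> layer j" and f: "f \<in> kq_carrier E \<sigma>"
  then obtain c where c: "y = lcomb bvec c len" "\<forall>k<j. c k = 0" by (auto simp: layer_def)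
  have "\<forall>m. lcomb (\<lambda>k. bvec k \<cdot> f) c m \<in> layer j"
  proof
    fix m show "lcomb (\<lambda>k. bvec k \<cdot> f) c m \<in> layer j"
    proof (induction m)
      case 0 then show ?case using mzero_layer by simp
    next
      case (Suc m)
      have "c m \<odot> (bvec m \<cdot> f) \<in> layer j"
      proof (cases "m < j")
        case True then show ?thesis using c zero_msmul[OF mact_closed[OF bvec_closed f]] mzero_layer by simp
      next
        case False then show ?thesis using bvec_mact_layer[OF f, of m] layer_antimono[of j m] msmul_layer by auto
      qed
      then show ?case using Suc madd_layer by simp
    qed
  qed
  then show ?thesis using c lcomb_mact[OF bvec_closed_all f] by simp
qed

lemma submod_layer: "sub (layer j)"
  unfolding submod_def using layer_subset mzero_layer madd_layer msmul_layer mact_layer by blast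

lemma carrier_eq_layer0: "C = layer 0"
proof
  show "C \<subseteq> layer 0"
  proof
    fix y assume "y \<in> C"
    then obtain f where "f \<in> kq_carrier E \<sigma>" "y = u \<cdot> f" using u_generates by (auto simp: cyc_submod_def)
    then show "y \<in> layer 0" using gen_mact_expansion unfolding layer_def by force
  qed
  show "layer 0 \<subseteq> C" using layer_subset .
qed

lemma gen_decomp: "y \<in> C \<Longrightarrow> \<exists>c0 z. z \<in> layer 1 \<and> y = c0 \<odot> u \<oplus> z"
proof -
  assume "y \<in> C"
  then obtain c where c: "y = lcomb bvec c len" using carrier_eq_layer0 by (auto simp: layer_def)
  have "y = c 0 \<odot> bvec 0 \<oplus> lcomb bvec (c(0:=0)) len" unfolding c by (rule lcomb_split_first[OF bvec_closed_all len_pos])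
  moreover have "lcomb bvec (c(0:=0)) len \<in> layer 1" unfolding layer_def by force
  ultimately show ?thesis using bvec_0 by metis
qed

lemma lcomb_eq_coeffs: "lcomb bvec c len = lcomb bvec d len \<Longrightarrow> k < len \<Longrightarrow> c k = d k"
proof -
  assume e: "lcomb bvec c len = lcomb bvec d len" and k: "k < len"
  have "lcomb bvec c len \<oplus> (-1) \<odot> lcomb bvec d len = lcomb bvec c len \<oplus> lcomb bvec (\<lambda>k. (-1) * d k) len"
    using msmul_lcomb[OF bvec_closed_all, of "-1" d len] by simp
  also have "\<dots> = lcomb bvec (\<lambda>k. c k + (-1) * d k) len"
    using lcomb_add[OF bvec_closed_all, of c "\<lambda>k. (-1) * d k" len] by simp
  finally have "lcomb bvec (\<lambda>k. c k + (-1) * d k) len = lcomb bvec c len \<oplus> (-1) \<odot> lcomb bvec d len" by simp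
  also have "\<dots> = zr" using e madd_minus_one_msmul lcomb_closed[OF bvec_closed_all] by simp
  finally have "c k + (-1) * d k = 0" using bvec_independent k by blast
  then show ?thesis by simp
qed

lemma gen_notin_layer1: "u \<notin> layer 1"
proof
  assume "u \<in> layer 1"
  then obtain c where c: "u = lcomb bvec c len" "c 0 = 0" by (auto simp: layer_def)
  have "u = lcomb bvec (\<lambda>k. if k = 0 then 1 else 0) len" using lcomb_delta[OF bvec_closed_all, of 0 len] len_pos bvec_0 by simp
  then have "(1::'k) = c 0" using lcomb_eq_coeffs[of "\<lambda>k. if k = 0 then 1 else 0" c 0] c len_pos by simp
  then show False using c by simp
qed

lemma maximal_layer1: "maximal_submod E \<sigma> M (layer 1)"
  unfolding maximal_submod_def
proof (intro conjI allI impI)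
  show "sub (layer 1)" using submod_layer .
  show "layer 1 \<noteq> C" using gen_notin_layer1 uC by blast
  fix N' assume N': "sub N' \<and> layer 1 \<subseteq> N'"
  show "N' = layer 1 \<or> N' = C"
  proof (cases "N' = layer 1")
    case False
    then obtain y where y: "y \<in> N'" "y \<notin> layer 1" using N' by blast
    have yC: "y \<in> C" using y N' by (auto simp: submod_def)
    obtain c0 z where cz: "z \<in> layer 1" "y = c0 \<odot> u \<oplus> z" using gen_decomp[OF yC] by blast
    have zC: "z \<in> C" using cz layer_subset by blast
    have c0: "c0 \<noteq> 0"
    proof
      assume "c0 = 0"
      then have "y = z" using cz zero_msmul[OF uC] mzero_madd zC by simp
      then show False using y cz by simp
    qed
    have "y \<oplus> (-1) \<odot> z = c0 \<odot> u \<oplus> (z \<oplus> (-1) \<odot> z)" using cz madd_assoc msmul_closed uC zC by simp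
    also have "\<dots> = c0 \<odot> u" using madd_minus_one_msmul[OF zC] madd_mzero msmul_closed[OF uC] by simp
    finally have "c0 \<odot> u \<in> N'" using N' y cz(1) by (metis (no_types, lifting) submod_def subsetD)
    then have "inverse c0 \<odot> (c0 \<odot> u) \<in> N'" using N' by (simp add: submod_def)
    then have "u \<in> N'" using mult_msmul[OF uC, of "inverse c0" c0] c0 one_msmul[OF uC] by simp
    then have "C \<subseteq> N'" using cyc_submod_least N' u_generates by blast
    then show ?thesis using N' by (auto simp: submod_def)
  qed simp
qed

lemma rad_eq_layer1: "rad E \<sigma> M = layer 1"
proof -
  have "{N. maximal_submod E \<sigma> M N} = {layer 1}"
  proof (intro set_eqI iffI)
    fix N assume "N \<in> {N. maximal_submod E \<sigma> M N}"
    then have N: "maximal_submod E \<sigma> M N" by simp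
    have subN: "sub N" using N by (simp add: maximal_submod_def)
    have m1: "\<forall>N'. sub N' \<and> layer 1 \<subseteq> N' \<longrightarrow> N' = layer 1 \<or> N' = C" "layer 1 \<noteq> C"
      using maximal_layer1 by (auto simp: maximal_submod_def)
    have mN: "\<forall>N'. sub N' \<and> N \<subseteq> N' \<longrightarrow> N' = N \<or> N' = C" "N \<noteq> C"
      using N by (auto simp: maximal_submod_def)
    from submod_chain[OF subN submod_layer] have "N = layer 1"
    proof
      assume "N \<subseteq> layer 1" then show ?thesis using mN submod_layer m1(2) by blast
    next
      assume "layer 1 \<subseteq> N" then show ?thesis using m1 subN mN(2) by blast
    qed
    then show "N \<in> {layer 1}" by simp
  next
    fix N assume "N \<in> {layer 1}" then show "N \<in> {N. maximal_submod E \<sigma> M N}" using maximal_layer1 by simp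
  qed
  then show ?thesis using layer_subset by (auto simp: rad_def)
qed

lemma last_layer_line: "layer (len - 1) = {c \<odot> bvec (len - 1) | c. True}"
proof
  show "layer (len - 1) \<subseteq> {c \<odot> bvec (len - 1) | c. True}"
  proof
    fix y assume "y \<in> layer (len - 1)"
    then obtain c where c: "y = lcomb bvec c len" "\<forall>k<len-1. c k = 0" by (auto simp: layer_def)
    have "\<forall>k. len - 1 < k \<and> k < len \<longrightarrow> bvec k = zr" by auto
    then have "lcomb bvec c len = c (len-1) \<odot> bvec (len-1)" using lcomb_single_survivor[OF bvec_closed_all, of "len-1" len c] c len_pos by simp
    then show "y \<in> {c \<odot> bvec (len - 1) | c. True}" using c by blast
  qed
  show "{c \<odot> bvec (len - 1) | c. True} \<subseteq> layer (len - 1)"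
  proof
    fix y assume "y \<in> {c \<odot> bvec (len - 1) | c. True}"
    then obtain e where "y = e \<odot> bvec (len - 1)" by blast
    then show "y \<in> layer (len - 1)" using bvec_in_layer[of "len-1" "len-1"] msmul_layer by simp
  qed
qed

lemma simple_last_layer: "simple_mod E \<sigma> (restr M (layer (len - 1)))"
  using simple_mod_line[OF bvec_closed bvec_nonzero[of "len-1"] last_layer_line] len_pos by simp

lemma soc_eq_last_layer: "soc E \<sigma> M = layer (len - 1)"
proof -
  let ?F = "{N. sub N \<and> (\<forall>S. sub S \<and> simple_mod E \<sigma> (restr M S) \<longrightarrow> S \<subseteq> N)}"
  have inF0: "sub (layer (len - 1)) \<and> (\<forall>S. sub S \<and> simple_mod E \<sigma> (restr M S) \<longrightarrow> S \<subseteq> layer (len - 1))"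
  proof (intro conjI allI impI)
    show "sub (layer (len-1))" using submod_layer .
    fix S assume S: "sub S \<and> simple_mod E \<sigma> (restr M S)"
    from submod_chain[OF conjunct1[OF S] submod_layer] show "S \<subseteq> layer (len-1)"
    proof
      assume L: "layer (len - 1) \<subseteq> S"
      have "submod E \<sigma> (restr M S) (layer (len-1))" using submod_layer L by (auto simp: submod_def restr_def)
      then have "layer (len-1) = {zr} \<or> layer (len-1) = S" using S by (auto simp: simple_mod_def restr_def)
      moreover have "bvec (len-1) \<in> layer (len-1)" using bvec_in_layer by simp
      ultimately show ?thesis using bvec_nonzero[of "len-1"] len_pos by auto
    qed simp
  qed
  then have inF: "layer (len - 1) \<in> ?F" by simp
  have "\<forall>N\<in>?F. layer (len - 1) \<subseteq> N" using submod_layer simple_last_layer by blast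
  then show ?thesis unfolding soc_def using inF by blast
qed

lemma idem_last_bvec: "bvec (len - 1) \<cdot> idem ((\<sigma> \<alpha> ^^ (len - 1)) s) = bvec (len - 1)"
  unfolding bvec_def using mact_path_idem[OF uC cyc_walk_walk] cyc_walk_end sigma_pow_edge sE alpha_mem by simp

lemma top_mod_eq: "top_mod E \<sigma> M = quot M (layer 1)"
  by (simp add: top_mod_def rad_eq_layer1)

lemma quot_layer1_gen_nonzero: "coset M (layer 1) u \<noteq> mzero (quot M (layer 1))"
proof
  assume "coset M (layer 1) u = mzero (quot M (layer 1))"
  then have "coset M (layer 1) u = coset M (layer 1) zr" using coset_mzero[OF submod_layer] by (simp add: quot_def)
  then obtain m where m: "m \<in> layer 1" "u = zr \<oplus> m" using coset_eq_imp[OF submod_layer uC] by blast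
  have "m \<in> C" using m(1) layer_subset by blast
  then have "u = m" using m(2) mzero_madd by simp
  then show False using m(1) gen_notin_layer1 by simp
qed

lemma quot_layer1_idem_off:
  assumes t: "t \<in> E" "t \<noteq> s" and Y: "Y \<in> carr (quot M (layer 1))"
    and fixed: "mact (quot M (layer 1)) Y (idem t) = Y"
  shows "Y = mzero (quot M (layer 1))"
proof -
  obtain y where y: "y \<in> C" "Y = coset M (layer 1) y" using Y by (auto simp: quot_def)
  obtain c z where z: "z \<in> layer 1" "y = c \<odot> u \<oplus> z" using gen_decomp[OF y(1)] by blast
  have zC: "z \<in> C" using z layer_subset by blast
  have et: "idem t \<in> kq_carrier E \<sigma>" using idem_carrier[OF t(1)] .
  have "u \<cdot> idem t = zr" using mact_path_off_idem[OF uC sE u_idem, of t "[]"] t by (simp add: idem_def)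
  then have "y \<cdot> idem t = z \<cdot> idem t"
    using z madd_mact[OF msmul_closed[OF uC] zC et] msmul_mact[OF uC et] msmul_mzero mzero_madd mact_closed[OF zC et]
    by simp
  then have "y \<cdot> idem t \<in> layer 1" using mact_layer[OF z(1) et] by simp
  then have "coset M (layer 1) (y \<cdot> idem t) = layer 1" using coset_submod_mem[OF submod_layer] by blast
  moreover have "mact (quot M (layer 1)) Y (idem t) = coset M (layer 1) (y \<cdot> idem t)"
    using quot_mact_coset[OF submod_layer y(1) et] y(2) by simp
  ultimately show ?thesis using fixed by (simp add: quot_def)
qed

lemma top_concentrated: "concentrated_at E (top_mod E \<sigma> M) s"
proof -
  have "mact (quot M (layer 1)) (coset M (layer 1) u) (idem s) = coset M (layer 1) u"
    using quot_mact_coset[OF submod_layer uC idem_carrier[OF sE]] u_idem by simp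
  moreover have "coset M (layer 1) u \<in> carr (quot M (layer 1))" using uC by (simp add: quot_def)
  ultimately have nonzero: "\<exists>Y\<in>carr (quot M (layer 1)). Y \<noteq> mzero (quot M (layer 1)) \<and> mact (quot M (layer 1)) Y (idem s) = Y"
    using quot_layer1_gen_nonzero by blast
  have off: "\<forall>t\<in>E. t \<noteq> s \<longrightarrow> (\<forall>Y\<in>carr (quot M (layer 1)).
      mact (quot M (layer 1)) Y (idem t) = Y \<longrightarrow> Y = mzero (quot M (layer 1)))"
    using quot_layer1_idem_off by blast
  have zero: "mzero (quot M (layer 1)) \<in> carr (quot M (layer 1))"
    "\<forall>Y\<in>carr (quot M (layer 1)). msmul (quot M (layer 1)) 0 Y = mzero (quot M (layer 1))"
    using quot_zero_facts[OF submod_layer] by auto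
  show ?thesis
    unfolding concentrated_at_def top_mod_eq using conjI[OF zero(1) conjI[OF zero(2) conjI[OF nonzero off]]] .
qed

lemma soc_concentrated: "concentrated_at E (soc_mod E \<sigma> M) ((\<sigma> \<alpha> ^^ (len - 1)) s)"
proof -
  define t0 where "t0 = (\<sigma> \<alpha> ^^ (len - 1)) s"
  define v where "v = bvec (len - 1)"
  have t0E: "t0 \<in> E" using sigma_pow_edge sE alpha_mem t0_def by blast
  have fixed: "v \<cdot> idem t0 = v" using idem_last_bvec t0_def v_def by simp
  have "Y = zr" if t: "t \<in> E" "t \<noteq> t0" and Y: "Y \<in> layer (len - 1)" and e: "Y \<cdot> idem t = Y" for t Y
  proof -
    obtain c where c: "Y = c \<odot> v" using Y last_layer_line v_def by blast
    have "v \<cdot> idem t = zr"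
      using mact_path_off_idem[OF bvec_closed t0E fixed[unfolded v_def], of t "[]"] t by (simp add: idem_def v_def)
    then show "Y = zr" using e c msmul_mact[OF bvec_closed idem_carrier[where 'k='k, OF t(1)]] msmul_mzero v_def by simp
  qed
  then have off: "\<forall>t\<in>E. t \<noteq> t0 \<longrightarrow> (\<forall>Y\<in>layer (len - 1). Y \<cdot> idem t = Y \<longrightarrow> Y = zr)" by blast
  have "v \<in> layer (len - 1)" "v \<noteq> zr" using bvec_in_layer bvec_nonzero len_pos v_def by auto
  then have nonzero: "\<exists>Y\<in>layer (len - 1). Y \<noteq> zr \<and> Y \<cdot> idem t0 = Y" using fixed by blast
  have zero: "\<forall>Y\<in>layer (len - 1). 0 \<odot> Y = zr" using zero_msmul layer_subset by blast
  show ?thesis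
    unfolding concentrated_at_def soc_mod_def soc_eq_last_layer restr_def t0_def[symmetric]
    using off nonzero zero mzero_layer by simp
qed

lemma gen_mact_eq_iff: "f \<in> kq_carrier E \<sigma> \<Longrightarrow> g \<in> kq_carrier E \<sigma> \<Longrightarrow>
   (u \<cdot> f = u \<cdot> g) = (\<forall>k<len. f (s, cyc_walk \<sigma> s \<alpha> k) = g (s, cyc_walk \<sigma> s \<alpha> k))"
proof -
  assume f: "f \<in> kq_carrier E \<sigma>" and g: "g \<in> kq_carrier E \<sigma>"
  show ?thesis
  proof
    assume "u \<cdot> f = u \<cdot> g"
    then have e: "lcomb bvec (\<lambda>k. f (s, cyc_walk \<sigma> s \<alpha> k)) len = lcomb bvec (\<lambda>k. g (s, cyc_walk \<sigma> s \<alpha> k)) len"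
      using gen_mact_expansion[OF f] gen_mact_expansion[OF g] by simp
    show "\<forall>k<len. f (s, cyc_walk \<sigma> s \<alpha> k) = g (s, cyc_walk \<sigma> s \<alpha> k)"
    proof (intro allI impI)
      fix k assume "k < len"
      then show "f (s, cyc_walk \<sigma> s \<alpha> k) = g (s, cyc_walk \<sigma> s \<alpha> k)" using lcomb_eq_coeffs[OF e] by blast
    qed
  next
    assume "\<forall>k<len. f (s, cyc_walk \<sigma> s \<alpha> k) = g (s, cyc_walk \<sigma> s \<alpha> k)"
    then show "u \<cdot> f = u \<cdot> g" using gen_mact_expansion[OF f] gen_mact_expansion[OF g] lcomb_cong[of len "\<lambda>k. f (s, cyc_walk \<sigma> s \<alpha> k)" "\<lambda>k. g (s, cyc_walk \<sigma> s \<alpha> k)" bvec] by simp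
  qed
qed

lemma gen_spans: "\<forall>y\<in>C. \<exists>f\<in>kq_carrier E \<sigma>. y = u \<cdot> f"
  using u_generates by (auto simp: cyc_submod_def)

lemma len_ge2: "\<not> simple_mod E \<sigma> M \<Longrightarrow> 2 \<le> len"
proof (rule ccontr)
  assume "\<not> simple_mod E \<sigma> M" and "\<not> 2 \<le> len"
  then have "len = 1" using len_pos by simp
  then have "simple_mod E \<sigma> (restr M C)" using carrier_eq_layer0 simple_last_layer by simp
  then show False using \<open>\<not> simple_mod E \<sigma> M\<close> restr_carrier by simp
qed

end

text \<open>The string with top \<open>s\<close> running \<open>n - 1\<close> steps around \<open>\<alpha>\<close>. It fits into the projective
cover \<open>e\<^sub>s A\<close> only if \<open>n \<le> val \<alpha> + 1\<close>, and \<open>n = val \<alpha> + 1\<close> is possible only when the other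
endpoint of \<open>s\<close> is truncated, i.e. no other arrow starts at \<open>s\<close>.\<close>

definition string_params :: "'v set set \<Rightarrow> 'v set \<Rightarrow> 'v \<Rightarrow> nat \<Rightarrow> bool" where
  "string_params E s \<alpha> n \<longleftrightarrow> (s, \<alpha>) \<in> qarrows E \<and> 2 \<le> n \<and> n \<le> Suc (val E \<alpha>)
     \<and> (card E \<noteq> 1 \<longrightarrow> (\<forall>\<beta>. (s, \<beta>) \<in> qarrows E \<and> \<beta> \<noteq> \<alpha> \<longrightarrow> n \<le> val E \<alpha>))"

definition string_module ::
  "'v set set \<Rightarrow> ('v \<Rightarrow> 'v set \<Rightarrow> 'v set) \<Rightarrow> ('m,'v,'k::field) kqmod \<Rightarrow> 'v set \<Rightarrow> 'v \<Rightarrow> nat \<Rightarrow> bool" where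
  "string_module E \<sigma> M s \<alpha> n \<longleftrightarrow> string_params E s \<alpha> n
     \<and> (\<exists>u\<in>carr M. (\<forall>y\<in>carr M. \<exists>f\<in>kq_carrier E \<sigma>. y = mact M u f)
          \<and> (\<forall>f\<in>kq_carrier E \<sigma>. \<forall>g\<in>kq_carrier E \<sigma>.
               mact M u f = mact M u g \<longleftrightarrow> (\<forall>k<n. f (s, cyc_walk \<sigma> s \<alpha> k) = g (s, cyc_walk \<sigma> s \<alpha> k))))
     \<and> concentrated_at E (top_mod E \<sigma> M) s
     \<and> concentrated_at E (soc_mod E \<sigma> M) ((\<sigma> \<alpha> ^^ (n - 1)) s)"

lemma (in uniserial_mod) uniserial_string_module:
  assumes "\<not> simple_mod E \<sigma> M"
  shows "\<exists>s \<alpha> n. string_module E \<sigma> M s \<alpha> n"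
proof -
  obtain u s where us: "s \<in> E" "u \<in> C" "u \<cdot> idem s = u" "cyc_submod u = C" "u \<noteq> zr"
    using idem_generator_exists by blast
  interpret G: uniserial_gen V E \<sigma> M u s by unfold_locales (use us in auto)
  obtain \<alpha> where \<alpha>: "(s, \<alpha>) \<in> qarrows E" "u \<cdot> path_elem (s, [(s, \<alpha>)]) \<noteq> zr"
    using G.simple_if_no_active_arrow assms by blast
  interpret U: string_mod V E \<sigma> M u s \<alpha> by unfold_locales (use \<alpha> in auto)
  have "string_module E \<sigma> M s \<alpha> U.len"
    unfolding string_module_def string_params_def
    using \<alpha> us U.len_ge2[OF assms] U.len_le_Suc_val U.len_le_val U.gen_spans U.gen_mact_eq_iff
      U.top_concentrated U.soc_concentrated by blast
  then show ?thesis by blast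
qed

context brauer_graph
begin

text \<open>The end edge of a string lies on both endpoints of its top edge \<open>s\<close> only if it is \<open>s\<close>
itself, as there are no multiple edges; this forces the two strings to turn around the same
vertex.\<close>

lemma string_params_same_vertex:
  assumes str: "string_params E s \<alpha> n" and str': "string_params E s \<alpha>' n'"
    and ends: "(\<sigma> \<alpha> ^^ (n - 1)) s = (\<sigma> \<alpha>' ^^ (n' - 1)) s"
  shows "\<alpha> = \<alpha>'"
proof (rule ccontr)
  assume ne: "\<alpha> \<noteq> \<alpha>'"
  have q: "(s, \<alpha>) \<in> qarrows E" "(s, \<alpha>') \<in> qarrows E" using str str' by (auto simp: string_params_def)
  then have "card E \<noteq> 1" using ne by (auto simp: qarrows_def)
  then have n: "2 \<le> n" "n \<le> val E \<alpha>" using str q(2) ne by (auto simp: string_params_def)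
  have sE: "s \<in> E" and \<alpha>: "\<alpha> \<in> s" "\<alpha>' \<in> s" using q qarrow_mem by auto
  let ?t = "(\<sigma> \<alpha> ^^ (n - 1)) s"
  have t: "?t \<in> E" "\<alpha> \<in> ?t" using sigma_pow_edge[OF sE \<alpha>(1)] by auto
  have "\<alpha>' \<in> ?t" using sigma_pow_edge[OF sE \<alpha>(2)] ends by simp
  then have "?t = {\<alpha>, \<alpha>'}" using edge_eq_pair[OF t] ne by blast
  also have "\<dots> = (\<sigma> \<alpha> ^^ 0) s" using edge_eq_pair[OF sE \<alpha> ne] by simp
  finally have eq: "(\<sigma> \<alpha> ^^ (n - 1)) s = (\<sigma> \<alpha> ^^ 0) s" .
  have "n - 1 < val E \<alpha>" "0 < val E \<alpha>" using n by auto
  from sigma_pow_eq_imp_eq[OF sE \<alpha>(1) this eq] have "n - 1 = 0" .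
  then show False using n by simp
qed

lemma string_params_same_length:
  assumes str: "string_params E s \<alpha> n" and str': "string_params E s \<alpha> n'"
    and ends: "(\<sigma> \<alpha> ^^ (n - 1)) s = (\<sigma> \<alpha> ^^ (n' - 1)) s"
  shows "n = n'"
proof -
  define v where "v = val E \<alpha>"
  have sE: "s \<in> E" and \<alpha>: "\<alpha> \<in> s" using str qarrow_mem by (auto simp: string_params_def)
  have v: "0 < v" using val_pos[OF sE \<alpha>] v_def by simp
  have period: "(\<sigma> \<alpha> ^^ v) s = s" using sigma_pow_val[OF sE \<alpha>] v_def by simp
  have "(\<sigma> \<alpha> ^^ ((n - 1) mod v)) s = (\<sigma> \<alpha> ^^ (n - 1)) s" by (rule funpow_mod_eq[OF period])
  also have "\<dots> = (\<sigma> \<alpha> ^^ (n' - 1)) s" by (rule ends)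
  also have "\<dots> = (\<sigma> \<alpha> ^^ ((n' - 1) mod v)) s" by (rule funpow_mod_eq[OF period, symmetric])
  finally have eq: "(\<sigma> \<alpha> ^^ ((n - 1) mod v)) s = (\<sigma> \<alpha> ^^ ((n' - 1) mod v)) s" .
  have "(n - 1) mod v < val E \<alpha>" "(n' - 1) mod v < val E \<alpha>" using v v_def by simp_all
  from sigma_pow_eq_imp_eq[OF sE \<alpha> this eq] have eq_mod: "(n - 1) mod v = (n' - 1) mod v" .
  have mod_cases: "k mod v = (if k = v then 0 else k)" if "1 \<le> k" "k \<le> v" for k
  proof (cases "k = v")
    case False then show ?thesis using that by simp
  qed simp
  have "2 \<le> n" "n \<le> Suc v" "2 \<le> n'" "n' \<le> Suc v"
    using str str' unfolding string_params_def v_def by blast+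
  then have "1 \<le> n - 1" "n - 1 \<le> v" "1 \<le> n' - 1" "n' - 1 \<le> v" by linarith+
  then have "(if n - 1 = v then 0 else n - 1) = (if n' - 1 = v then 0 else n' - 1)"
    using eq_mod mod_cases[of "n - 1"] mod_cases[of "n' - 1"] by simp
  then have "n - 1 = n' - 1" using \<open>1 \<le> n - 1\<close> \<open>1 \<le> n' - 1\<close> by (auto split: if_splits)
  then show ?thesis using \<open>2 \<le> n\<close> \<open>2 \<le> n'\<close> by simp
qed

lemma string_modules_iso:
  fixes L :: "('m,'v,'k::field) kqmod" and L' :: "('n,'v,'k) kqmod"
  assumes "kq_module E \<sigma> L" "kq_module E \<sigma> L'"
    and "string_module E \<sigma> L s \<alpha> n" "string_module E \<sigma> L' s \<alpha> n"
  shows "mod_iso E \<sigma> L L'"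
proof -
  let ?P = "\<lambda>f g. \<forall>k<n. f (s, cyc_walk \<sigma> s \<alpha> k) = g (s, cyc_walk \<sigma> s \<alpha> k)"
  obtain u where u: "u \<in> carr L" and spans: "\<forall>y\<in>carr L. \<exists>f\<in>kq_carrier E \<sigma>. y = mact L u f"
    and ker: "\<forall>f\<in>kq_carrier E \<sigma>. \<forall>g\<in>kq_carrier E \<sigma>. mact L u f = mact L u g \<longleftrightarrow> ?P f g"
    using assms(3) unfolding string_module_def by blast
  obtain u' where u': "u' \<in> carr L'" and spans': "\<forall>y\<in>carr L'. \<exists>f\<in>kq_carrier E \<sigma>. y = mact L' u' f"
    and ker': "\<forall>f\<in>kq_carrier E \<sigma>. \<forall>g\<in>kq_carrier E \<sigma>. mact L' u' f = mact L' u' g \<longleftrightarrow> ?P f g"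
    using assms(4) unfolding string_module_def by blast
  have "\<forall>f\<in>kq_carrier E \<sigma>. \<forall>g\<in>kq_carrier E \<sigma>. mact L u f = mact L u g \<longleftrightarrow> mact L' u' f = mact L' u' g"
    using ker ker' by simp
  then show ?thesis using cyclic_mods_iso[OF assms(1,2) u spans u' spans'] by blast
qed

end

theorem corollary5p2:
  fixes V :: "'v set" and E :: "'v set set" and \<sigma> :: "'v \<Rightarrow> 'v set \<Rightarrow> 'v set"
    and L :: "('m,'v,'k::field) kqmod" and L' :: "('n,'v,'k) kqmod"
  assumes "brauer_graph_simple_m1 V E \<sigma>"
    and "bga_module E \<sigma> L" and "bga_module E \<sigma> L'"
    and "uniserial E \<sigma> L" and "uniserial E \<sigma> L'"
    and "\<not> simple_mod E \<sigma> L" and "\<not> simple_mod E \<sigma> L'"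
    and "\<not> projective_mod E \<sigma> L" and "\<not> projective_mod E \<sigma> L'"
    and "mod_iso E \<sigma> (soc_mod E \<sigma> L) (soc_mod E \<sigma> L')"
    and "mod_iso E \<sigma> (top_mod E \<sigma> L) (top_mod E \<sigma> L')"
  shows "mod_iso E \<sigma> L L'"
proof -
  interpret brauer_graph V E \<sigma> by unfold_locales fact
  interpret A: uniserial_mod V E \<sigma> L by unfold_locales (use assms in \<open>auto simp: bga_module_def\<close>)
  interpret B: uniserial_mod V E \<sigma> L' by unfold_locales (use assms in \<open>auto simp: bga_module_def\<close>)
  obtain s \<alpha> n where str: "string_module E \<sigma> L s \<alpha> n"
    using A.uniserial_string_module assms(6) by blast
  obtain s' \<alpha>' n' where str': "string_module E \<sigma> L' s' \<alpha>' n'"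
    using B.uniserial_string_module assms(7) by blast
  have par: "string_params E s \<alpha> n" and par': "string_params E s' \<alpha>' n'"
    and top: "concentrated_at E (top_mod E \<sigma> L) s" and top': "concentrated_at E (top_mod E \<sigma> L') s'"
    and soc: "concentrated_at E (soc_mod E \<sigma> L) ((\<sigma> \<alpha> ^^ (n - 1)) s)"
    and soc': "concentrated_at E (soc_mod E \<sigma> L') ((\<sigma> \<alpha>' ^^ (n' - 1)) s')"
    using str str' unfolding string_module_def by blast+
  have sE: "s \<in> E" and \<alpha>: "\<alpha> \<in> s" using par qarrow_mem unfolding string_params_def by blast+
  have "s = s'" using concentrated_at_iso_unique[OF assms(11) top top' sE] .
  have "(\<sigma> \<alpha> ^^ (n - 1)) s = (\<sigma> \<alpha>' ^^ (n' - 1)) s"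
    using concentrated_at_iso_unique[OF assms(10) soc soc'] sigma_pow_edge[OF sE \<alpha>] \<open>s = s'\<close> by simp
  then have "\<alpha> = \<alpha>'" "n = n'"
    using string_params_same_vertex[OF par] string_params_same_length[OF par] par' \<open>s = s'\<close> by auto
  then show ?thesis using string_modules_iso[OF A.module B.module str] str' \<open>s = s'\<close> by simp
qed

end
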